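(* Let $A$ be a $C^*$-algebra, $X$ a full Hilbert $A$-module, $H,K$ Hilbert spaces, $\Phi\in\mathcal{C}(X,L(H,K))$, with Stinespring construction $(\pi_\Phi,H_\Phi,K_\Phi,V_\Phi,W_\Phi)$. Then: (1) $\Phi_I=\Phi$; (2) if $T\oplus S\in\pi_\Phi(X)'$ with $T\oplus S\geq 0$ and $\lambda>0$, then $\Phi_{\lambda T}=\lambda\Phi_T$; (3) if $T_1\oplus S_1,\ T_2\oplus S_2\in\pi_\Phi(X)'$ and $0\leq T_1\leq T_2$, then $\Phi_{\sqrt{T_1}}\curlyeqprec\Phi_{\sqrt{T_2}}$.
   Context: A Hilbert $A$-module $X$ is a right $A$-module with an $A$-valued inner product $\langle\cdot,\cdot\rangle$ (conjugate linear in the first and $A$-linear in the second variable), complete in the norm $\|x\|=\|\langle x,x\rangle\|^{1/2}$; it is full if the closed two-sided ideal generated by $\{\langle x,y\rangle\}$ is $A$. A map $\Phi:X\to L(H,K)$ is completely positive if there is a completely positive map $\varphi:A\to L(H)$ with $\Phi(x)^*\Phi(y)=\varphi(\langle x,y\rangle)$ for all $x,y\in X$; $\mathcal{C}(X,L(H,K))$ is the set of such maps. For $\Phi,\Psi\in\mathcal{C}(X,L(H,K))$ write $\Phi\curlyeqprec\Psi$ if $\Phi(x)^*\Phi(x)\leq\Psi(x)^*\Psi(x)$ for all $x\in X$. $[Y]$ denotes closed linear span and $p_M$ orthogonal projection onto $M$. A representation of $X$ on $H',K'$ is a map $\pi:X\to L(H',K')$ with a $*$-representation $\pi_A$ of $A$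 on $H'$ such that $\pi(x)^*\pi(y)=\pi_A(\langle x,y\rangle)$. The Stinespring construction of $\Phi$ (with associated $\varphi$) is $(\pi_\Phi,H_\Phi,K_\Phi,V_\Phi,W_\Phi)$ where: $\pi_\varphi$ is a $*$-representation of $A$ on $H_\Phi$, $V_\Phi\in L(H,H_\Phi)$, $\varphi(a)=V_\Phi^*\pi_\varphi(a)V_\Phi$, $[\pi_\varphi(A)V_\Phi H]=H_\Phi$; $K_\Phi=[\Phi(X)H]\subseteq K$; $\pi_\Phi:X\to L(H_\Phi,K_\Phi)$ is the representation with underlying $*$-representation $\pi_\varphi$ determined by $\pi_\Phi(x)\pi_\varphi(a)V_\Phi h=\Phi(xa)h$; $W_\Phi\in L(K,K_\Phi)$ is the coisometry $W_\Phi k=p_{K_\Phi}k$; then $\Phi(x)=W_\Phi^*\pi_\Phi(x)V_\Phi$. The commutant is the $C^*$-algebra $\pi_\Phi(X)'=\{T\oplus S\in L(H_\Phi\oplus K_\Phi):\pi_\Phi(x)T=S\pi_\Phi(x),\ \pi_\Phi(x)^*S=T\pi_\Phi(x)^*\ \forall x\}$. Since $\pi_\Phi$ is non-degenerate, an element $T\oplus S\in\pi_\Phi(X)'$ is uniquely determined by $T$, and $T\oplus S\ge0$ whenever $T\ge 0$. For a positive $T\oplus S\in\pi_\Phi(X)'$ one defines $\Phi_T:X\to L(H,K)$ by $\Phi_T(x)=W_\Phi^*\sqrt{S}\,\pi_\Phi(x)\sqrt{T}\,V_\Phi$ (this is completely positive); $\Phi_{\sqrt{T}}$ refers to the positive element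 $\sqrt{T}\oplus\sqrt{S}$ of $\pi_\Phi(X)'$, and $I$ denotes $I\oplus I$. *)

theory Defs
  imports "HOL-Analysis.Analysis"
begin

class complex_vector = real_vector +
  fixes scaleC :: "complex \<Rightarrow> 'a \<Rightarrow> 'a" (infixr \<open>*\<^sub>C\<close> 75)
  assumes scaleC_add_right: "a *\<^sub>C (x + y) = a *\<^sub>C x + a *\<^sub>C y"
    and scaleC_add_left: "(a + b) *\<^sub>C x = a *\<^sub>C x + b *\<^sub>C x"
    and scaleC_scaleC: "a *\<^sub>C (b *\<^sub>C x) = (a * b) *\<^sub>C x"
    and scaleC_one: "1 *\<^sub>C x = x"
    and scaleR_scaleC: "scaleR r x = complex_of_real r *\<^sub>C x"

class complex_normed_vector = complex_vector + real_normed_vector +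
  assumes norm_scaleC: "norm (a *\<^sub>C x) = cmod a * norm x"

class complex_inner = complex_normed_vector +
  fixes cinner :: "'a \<Rightarrow> 'a \<Rightarrow> complex"
  assumes cinner_commute: "cinner x y = cnj (cinner y x)"
    and cinner_add_left: "cinner (x + y) z = cinner x z + cinner y z"
    and cinner_scaleC_left: "cinner (r *\<^sub>C x) y = cnj r * cinner x y"
    and cinner_ge_zero: "Im (cinner x x) = 0 \<and> 0 \<le> Re (cinner x x)"
    and cinner_eq_zero_iff: "cinner x x = 0 \<longleftrightarrow> x = 0"
    and norm_eq_sqrt_cinner: "norm x = sqrt (Re (cinner x x))"

class chilbert_space = complex_inner + complete_space

definition bounded_clinear :: "('a::complex_normed_vector \<Rightarrow> 'b::complex_normed_vector) \<Rightarrow> bool" where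
  "bounded_clinear f \<longleftrightarrow> bounded_linear f \<and> (\<forall>c x. f (c *\<^sub>C x) = c *\<^sub>C f x)"

definition cadj :: "('a::complex_inner \<Rightarrow> 'b::complex_inner) \<Rightarrow> 'b \<Rightarrow> 'a" where
  "cadj f = (SOME g. \<forall>x y. cinner (f x) y = cinner x (g y))"

definition nonneg_complex :: "complex \<Rightarrow> bool" where
  "nonneg_complex z \<longleftrightarrow> Im z = 0 \<and> 0 \<le> Re z"

definition positive_op :: "('a::complex_inner \<Rightarrow> 'a) \<Rightarrow> bool" where
  "positive_op T \<longleftrightarrow> bounded_clinear T \<and> (\<forall>x. nonneg_complex (cinner x (T x)))"

definition op_le :: "('a::complex_inner \<Rightarrow> 'a) \<Rightarrow> ('a \<Rightarrow> 'a) \<Rightarrow> bool" where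
  "op_le A B \<longleftrightarrow> bounded_clinear A \<and> bounded_clinear B \<and> positive_op (\<lambda>x. B x - A x)"

definition op_sqrt :: "('a::complex_inner \<Rightarrow> 'a) \<Rightarrow> 'a \<Rightarrow> 'a" where
  "op_sqrt T = (THE R. positive_op R \<and> R \<circ> R = T)"

definition cspan :: "'a::complex_vector set \<Rightarrow> 'a set" where
  "cspan S = {y. \<exists>F c. finite F \<and> F \<subseteq> S \<and> y = (\<Sum>v\<in>F. c v *\<^sub>C v)}"

definition is_orth_proj :: "'a::complex_inner set \<Rightarrow> 'a \<Rightarrow> 'a \<Rightarrow> bool" where
  "is_orth_proj M k m \<longleftrightarrow> m \<in> M \<and> (\<forall>u\<in>M. cinner u (k - m) = 0)"

class cstar_algebra = complex_normed_vector + real_normed_algebra + complete_space +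
  fixes cstar :: "'a \<Rightarrow> 'a"
  assumes mult_scaleC_left: "(c *\<^sub>C x) * y = c *\<^sub>C (x * y)"
    and mult_scaleC_right: "x * (c *\<^sub>C y) = c *\<^sub>C (x * y)"
    and cstar_cstar: "cstar (cstar x) = x"
    and cstar_add: "cstar (x + y) = cstar x + cstar y"
    and cstar_scaleC: "cstar (c *\<^sub>C x) = cnj c *\<^sub>C cstar x"
    and cstar_mult: "cstar (x * y) = cstar y * cstar x"
    and cstar_identity: "norm (cstar x * x) = (norm x)\<^sup>2"

definition cstar_pos :: "'a::cstar_algebra \<Rightarrow> bool" where
  "cstar_pos a \<longleftrightarrow> (\<exists>b. a = cstar b * b)"

definition closed_ideal :: "'a::cstar_algebra set \<Rightarrow> bool" where
  "closed_ideal I \<longleftrightarrow> 0 \<in> I \<and> (\<forall>a\<in>I. \<forall>b\<in>I. a + b \<in> I) \<and> (\<forall>c. \<forall>a\<in>I. c *\<^sub>C a \<in> I)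
     \<and> (\<forall>a\<in>I. \<forall>b. a * b \<in> I \<and> b * a \<in> I) \<and> closed I"

definition hilbert_module ::
  "('x::{complex_normed_vector,complete_space} \<Rightarrow> 'a::cstar_algebra \<Rightarrow> 'x) \<Rightarrow> ('x \<Rightarrow> 'x \<Rightarrow> 'a) \<Rightarrow> bool" where
  "hilbert_module act ip \<longleftrightarrow>
     (\<forall>x y a. act (x + y) a = act x a + act y a)
   \<and> (\<forall>x a b. act x (a + b) = act x a + act x b)
   \<and> (\<forall>x a b. act (act x a) b = act x (a * b))
   \<and> (\<forall>x a c. act (c *\<^sub>C x) a = c *\<^sub>C act x a)
   \<and> (\<forall>x a c. act x (c *\<^sub>C a) = c *\<^sub>C act x a)
   \<and> (\<forall>x y z. ip x (y + z) = ip x y + ip x z)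
   \<and> (\<forall>x y c. ip x (c *\<^sub>C y) = c *\<^sub>C ip x y)
   \<and> (\<forall>x y a. ip x (act y a) = ip x y * a)
   \<and> (\<forall>x y. ip y x = cstar (ip x y))
   \<and> (\<forall>x. cstar_pos (ip x x))
   \<and> (\<forall>x. ip x x = 0 \<longrightarrow> x = 0)
   \<and> (\<forall>x. norm x = sqrt (norm (ip x x)))"

definition full_module :: "('x \<Rightarrow> 'x \<Rightarrow> 'a::cstar_algebra) \<Rightarrow> bool" where
  "full_module ip \<longleftrightarrow> (\<forall>I. closed_ideal I \<and> (\<forall>x y. ip x y \<in> I) \<longrightarrow> I = UNIV)"

definition cp_map :: "('a::cstar_algebra \<Rightarrow> 'h::chilbert_space \<Rightarrow> 'h) \<Rightarrow> bool" where
  "cp_map \<phi> \<longleftrightarrow> (\<forall>a. bounded_clinear (\<phi> a))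
    \<and> (\<forall>a b h. \<phi> (a + b) h = \<phi> a h + \<phi> b h)
    \<and> (\<forall>c a h. \<phi> (c *\<^sub>C a) h = c *\<^sub>C \<phi> a h)
    \<and> (\<forall>(n::nat) (B::nat \<Rightarrow> nat \<Rightarrow> 'a) (\<xi>::nat \<Rightarrow> 'h).
         nonneg_complex (\<Sum>i<n. \<Sum>j<n. cinner (\<xi> i) (\<phi> (\<Sum>k<n. cstar (B k i) * B k j) (\<xi> j))))"

definition star_rep :: "('a::cstar_algebra \<Rightarrow> 'h::chilbert_space \<Rightarrow> 'h) \<Rightarrow> bool" where
  "star_rep \<pi> \<longleftrightarrow> (\<forall>a. bounded_clinear (\<pi> a))
    \<and> (\<forall>a b h. \<pi> (a + b) h = \<pi> a h + \<pi> b h)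
    \<and> (\<forall>c a h. \<pi> (c *\<^sub>C a) h = c *\<^sub>C \<pi> a h)
    \<and> (\<forall>a b. \<pi> (a * b) = \<pi> a \<circ> \<pi> b)
    \<and> (\<forall>a. \<pi> (cstar a) = cadj (\<pi> a))"

definition module_rep ::
  "('x \<Rightarrow> 'x \<Rightarrow> 'a::cstar_algebra) \<Rightarrow> ('x \<Rightarrow> 'h::chilbert_space \<Rightarrow> 'k::chilbert_space) \<Rightarrow> ('a \<Rightarrow> 'h \<Rightarrow> 'h) \<Rightarrow> bool" where
  "module_rep ip \<pi> \<pi>A \<longleftrightarrow> star_rep \<pi>A \<and> (\<forall>x. bounded_clinear (\<pi> x))
     \<and> (\<forall>x y. cadj (\<pi> x) \<circ> \<pi> y = \<pi>A (ip x y))"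

text \<open>\<open>T \<oplus> S \<in> \<pi>_\<Phi>(X)'\<close>.\<close>
definition in_commutant ::
  "('x \<Rightarrow> 'hp::chilbert_space \<Rightarrow> 'kp::chilbert_space) \<Rightarrow> ('hp \<Rightarrow> 'hp) \<Rightarrow> ('kp \<Rightarrow> 'kp) \<Rightarrow> bool" where
  "in_commutant \<pi> T S \<longleftrightarrow> bounded_clinear T \<and> bounded_clinear S
     \<and> (\<forall>x. \<pi> x \<circ> T = S \<circ> \<pi> x \<and> cadj (\<pi> x) \<circ> S = T \<circ> cadj (\<pi> x))"

definition Phi_op ::
  "('k::chilbert_space \<Rightarrow> 'kp::chilbert_space) \<Rightarrow> ('h::chilbert_space \<Rightarrow> 'hp::chilbert_space)
   \<Rightarrow> ('x \<Rightarrow> 'hp \<Rightarrow> 'kp) \<Rightarrow> ('hp \<Rightarrow> 'hp) \<Rightarrow> ('kp \<Rightarrow> 'kp) \<Rightarrow> 'x \<Rightarrow> 'h \<Rightarrow> 'k" where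
  "Phi_op W V \<pi> T S x = cadj W \<circ> op_sqrt S \<circ> \<pi> x \<circ> op_sqrt T \<circ> V"

end

theory Submission
  imports Defs
begin

text \<open>
  Positive operators on a Hilbert space have unique positive square roots: for \<open>0 < e \<le> 1/\<parallel>T\<parallel>\<close>
  the operator \<open>C = I - eT\<close> is a contraction and \<open>\<surd>T = (I - p(C)) / \<surd>e\<close>, where
  \<open>p(z) = 1 - \<surd>(1 - z)\<close> has nonnegative coefficients summing to at most one. The series shows
  that \<open>\<surd>T\<close> commutes with every bounded operator intertwining \<open>T\<close>.

  In the Stinespring construction, \<open>W\<close> is the adjoint of the isometric inclusion \<open>J\<close> of \<open>K_\<Phi>\<close>,
  and \<open>\<pi>_\<Phi>(x) V\<close> agrees with \<open>\<Phi>(x)\<close> because both have Gram operator \<open>V* \<pi>_\<phi>(\<langle>x,x\<rangle>) V\<close>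
  and their mixed inner products can be evaluated on the dense set \<open>\<pi>_\<phi>(A) V H\<close>. This gives
  \<open>\<Phi>_I = \<Phi>\<close>, and \<open>\<Phi>_{\<lambda>T} = \<lambda>\<Phi>_T\<close> follows from \<open>\<surd>(\<lambda>T) = \<surd>\<lambda> \<surd>T\<close>. For \<open>T \<oplus> S\<close> in the
  commutant, \<open>\<Phi>_{\<surd>T}(x)* \<Phi>_{\<surd>T}(x) = V* \<pi>_\<phi>(\<langle>x,x\<rangle>) T V\<close>, which is monotone in \<open>T\<close> since
  \<open>\<pi>_\<phi>(\<langle>x,x\<rangle>)\<close> commutes with \<open>\<surd>(T\<^sub>2 - T\<^sub>1)\<close>.
\<close>

instance chilbert_space \<subseteq> banach ..

lemma scaleC_zero_left [simp]: "(0::complex) *\<^sub>C (x::'a::complex_vector) = 0"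
  using scaleR_scaleC[of 0 x] by simp

lemma scaleC_zero_right [simp]: "c *\<^sub>C (0::'a::complex_vector) = 0"
proof -
  have "c *\<^sub>C (0::'a) = c *\<^sub>C 0 + c *\<^sub>C 0" using scaleC_add_right[of c "0::'a" 0] by simp
  then show ?thesis by simp
qed

lemma scaleC_minus_right: "c *\<^sub>C (- x) = - (c *\<^sub>C (x::'a::complex_vector))"
proof -
  have "c *\<^sub>C (- x) + c *\<^sub>C x = 0" using scaleC_add_right[of c "-x" x] by simp
  then show ?thesis by (simp add: eq_neg_iff_add_eq_0)
qed

lemma scaleC_diff_right: "c *\<^sub>C (x - y) = c *\<^sub>C x - c *\<^sub>C (y::'a::complex_vector)"
  using scaleC_add_right[of c x "-y"] scaleC_minus_right[of c y] by simp

lemma scaleC_scaleR_comm: "c *\<^sub>C (r *\<^sub>R x) = r *\<^sub>R (c *\<^sub>C (x::'a::complex_vector))"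
  by (simp add: scaleR_scaleC scaleC_scaleC mult.commute)

declare scaleC_one [simp]

lemma bounded_linear_scaleC: "bounded_linear (\<lambda>x::'a::complex_normed_vector. c *\<^sub>C x)"
proof (rule bounded_linear_intro[where K="cmod c"])
  show "\<And>x y. c *\<^sub>C (x + y) = c *\<^sub>C x + c *\<^sub>C y" by (rule scaleC_add_right)
  show "\<And>r x. c *\<^sub>C (r *\<^sub>R x) = r *\<^sub>R (c *\<^sub>C x)" by (rule scaleC_scaleR_comm)
  fix x :: 'a
  show "norm (c *\<^sub>C x) \<le> norm x * cmod c"
    using complex_normed_vector_class.norm_scaleC[of c x] by (simp add: mult.commute)
qed

lemma cinner_add_right: "cinner x (y + z) = cinner x y + cinner x (z::'a::complex_inner)"
  by (metis cinner_commute cinner_add_left complex_cnj_add)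

lemma cinner_scaleC_right: "cinner x (c *\<^sub>C y) = c * cinner x (y::'a::complex_inner)"
  by (metis cinner_commute cinner_scaleC_left complex_cnj_cnj complex_cnj_mult)

lemma cinner_zero_left [simp]: "cinner 0 (y::'a::complex_inner) = 0"
  using cinner_add_left[of "0::'a" 0 y] by simp

lemma cinner_zero_right [simp]: "cinner x (0::'a::complex_inner) = 0"
  using cinner_add_right[of x "0::'a" 0] by simp

lemma cinner_minus_left: "cinner (- x) y = - cinner x (y::'a::complex_inner)"
  using cinner_add_left[of "-x" x y] by (simp add: eq_neg_iff_add_eq_0)

lemma cinner_minus_right: "cinner x (- y) = - cinner x (y::'a::complex_inner)"
  using cinner_add_right[of x "-y" y] by (simp add: eq_neg_iff_add_eq_0)

lemma cinner_diff_left: "cinner (x - y) z = cinner x z - cinner y (z::'a::complex_inner)"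
  using cinner_add_left[of x "-y" z] cinner_minus_left[of y z] by simp

lemma cinner_diff_right: "cinner x (y - z) = cinner x y - cinner x (z::'a::complex_inner)"
  using cinner_add_right[of x y "-z"] cinner_minus_right[of x z] by simp

lemma cinner_scaleR_left: "cinner (r *\<^sub>R x) y = of_real r * cinner x (y::'a::complex_inner)"
  by (simp add: scaleR_scaleC cinner_scaleC_left)

lemma cinner_scaleR_right: "cinner x (r *\<^sub>R y) = of_real r * cinner x (y::'a::complex_inner)"
  by (simp add: scaleR_scaleC cinner_scaleC_right)

lemma cinner_sum_left: "cinner (sum f A) y = (\<Sum>a\<in>A. cinner (f a) (y::'a::complex_inner))"
  by (induction A rule: infinite_finite_induct) (auto simp: cinner_add_left)

lemma cinner_sum_right: "cinner y (sum f A) = (\<Sum>a\<in>A. cinner y (f a::'a::complex_inner))"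
  by (induction A rule: infinite_finite_induct) (auto simp: cinner_add_right)

lemma cinner_self_real: "cinner x x = complex_of_real ((norm (x::'a::complex_inner))\<^sup>2)"
proof -
  have "Im (cinner x x) = 0" "0 \<le> Re (cinner x x)" using cinner_ge_zero by auto
  moreover have "(norm x)\<^sup>2 = Re (cinner x x)"
    using norm_eq_sqrt_cinner[of x] \<open>0 \<le> Re (cinner x x)\<close> by simp
  ultimately show ?thesis by (simp add: complex_eq_iff)
qed

lemma norm_sq_cinner: "(norm (x::'a::complex_inner))\<^sup>2 = Re (cinner x x)"
  using cinner_self_real[of x] by simp

lemma cinner_eq_all_left:
  assumes "\<And>z. cinner z x = cinner z (y::'a::complex_inner)"
  shows "x = y"
proof -
  have "cinner (x - y) (x - y) = 0"
    using assms[of "x-y"] by (simp add: cinner_diff_right)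
  then have "x - y = 0" using cinner_eq_zero_iff by blast
  then show ?thesis by simp
qed

lemma norm_diff_sq: "(norm (x - y))\<^sup>2 = (norm x)\<^sup>2 + (norm y)\<^sup>2 - 2 * Re (cinner x (y::'a::complex_inner))"
proof -
  have "cinner (x - y) (x - y) = cinner x x - cinner x y - cinner y x + cinner y y"
    by (simp add: cinner_diff_left cinner_diff_right)
  moreover have "Re (cinner y x) = Re (cinner x y)" by (subst cinner_commute) simp
  ultimately show ?thesis by (simp add: norm_sq_cinner)
qed

lemma norm_add_sq: "(norm (x + y))\<^sup>2 = (norm x)\<^sup>2 + (norm y)\<^sup>2 + 2 * Re (cinner x (y::'a::complex_inner))"
  using norm_diff_sq[of x "-y"] by (simp add: cinner_minus_right)

lemma bounded_clinearD:
  assumes "bounded_clinear f"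
  shows "bounded_linear f" "f (c *\<^sub>C x) = c *\<^sub>C f x"
  using assms unfolding bounded_clinear_def by auto

lemma clinear_add: "bounded_clinear f \<Longrightarrow> f (x + y) = f x + f y"
  using bounded_clinearD(1) linear_add bounded_linear.linear by blast

lemma clinear_diff: "bounded_clinear f \<Longrightarrow> f (x - y) = f x - f y"
  using bounded_clinearD(1) linear_diff bounded_linear.linear by blast

lemma clinear_scaleR: "bounded_clinear f \<Longrightarrow> f (r *\<^sub>R x) = r *\<^sub>R f x"
  using bounded_clinearD(1) linear_scale bounded_linear.linear by blast

lemma clinear_sum: "bounded_clinear f \<Longrightarrow> f (sum g A) = (\<Sum>a\<in>A. f (g a))"
  using bounded_clinearD(1) linear_sum bounded_linear.linear by blast

lemma bounded_clinear_id: "bounded_clinear id"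
  by (simp add: bounded_clinear_def bounded_linear_ident[unfolded id_def] id_def)

lemma bounded_clinear_ident: "bounded_clinear (\<lambda>x. x)"
  by (simp add: bounded_clinear_def bounded_linear_ident)

lemma bounded_clinear_compose: "bounded_clinear f \<Longrightarrow> bounded_clinear g \<Longrightarrow> bounded_clinear (\<lambda>x. f (g x))"
  unfolding bounded_clinear_def using bounded_linear_compose[of f g] by auto

lemma bounded_clinear_diff: "bounded_clinear f \<Longrightarrow> bounded_clinear g \<Longrightarrow> bounded_clinear (\<lambda>x. f x - g x)"
  unfolding bounded_clinear_def by (auto intro: bounded_linear_sub simp: scaleC_diff_right)

lemma bounded_clinear_scaleR: "bounded_clinear f \<Longrightarrow> bounded_clinear (\<lambda>x. r *\<^sub>R f x)"
  unfolding bounded_clinear_def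
  by (auto intro: bounded_linear_scaleR_right bounded_linear_compose[of "\<lambda>y. r *\<^sub>R y" f] simp: scaleC_scaleR_comm)

lemma bounded_clinear_norm_le: "bounded_clinear f \<Longrightarrow> norm (f x) \<le> onorm f * norm x"
  using bounded_clinearD(1) onorm by blast

lemma bounded_clinear_onorm_nonneg: "bounded_clinear f \<Longrightarrow> 0 \<le> onorm f"
  using bounded_clinearD(1) onorm_pos_le by blast

section \<open>Positive operators\<close>

lemma positive_opD:
  assumes "positive_op T"
  shows "bounded_clinear T" "Im (cinner x (T x)) = 0" "0 \<le> Re (cinner x (T x))"
  using assms unfolding positive_op_def nonneg_complex_def by auto

lemma positive_op_cinner_commute:
  fixes T :: "'a::complex_inner \<Rightarrow> 'a"
  assumes T: "positive_op T"
  shows "cinner x (T y) = cnj (cinner y (T x))"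
proof -
  have b: "bounded_clinear T" using positive_opD[OF T] by simp
  let ?a = "cinner x (T y)" and ?b = "cinner y (T x)"
  have e1: "cinner (x + y) (T (x + y)) = cinner x (T x) + cinner y (T y) + ?a + ?b"
    by (simp add: clinear_add[OF b] cinner_add_left cinner_add_right)
  have e2: "cinner (x + \<i> *\<^sub>C y) (T (x + \<i> *\<^sub>C y)) = cinner x (T x) + cinner y (T y) + \<i> * ?a - \<i> * ?b"
    by (simp add: clinear_add[OF b] bounded_clinearD(2)[OF b] cinner_add_left cinner_add_right
        cinner_scaleC_left cinner_scaleC_right algebra_simps)
  have i1: "Im (cinner (x + y) (T (x + y))) = 0" "Im (cinner (x + \<i> *\<^sub>C y) (T (x + \<i> *\<^sub>C y))) = 0"
       "Im (cinner x (T x)) = 0" "Im (cinner y (T y)) = 0"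
    using positive_opD(2)[OF T] by auto
  have "Im ?a + Im ?b = 0" using e1 i1 by simp
  moreover have "Re ?a - Re ?b = 0" using e2 i1 by simp
  ultimately show ?thesis by (simp add: complex_eq_iff)
qed

lemma positive_op_selfadjoint:
  fixes T :: "'a::complex_inner \<Rightarrow> 'a"
  assumes T: "positive_op T"
  shows "cinner (T x) y = cinner x (T y)"
  using positive_op_cinner_commute[OF T, of x y] cinner_commute[of "T x" y] by simp

lemma nonneg_quadratic_imp_discriminant:
  fixes A B C :: real
  assumes "\<And>t. 0 \<le> A - 2 * t * B + t\<^sup>2 * B * C" "0 \<le> B" "0 \<le> C"
  shows "B \<le> A * C"
proof (cases "C = 0")
  case True
  show ?thesis
  proof (rule ccontr)
    assume "\<not> B \<le> A * C"
    then have "B > 0" using True by simp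
    have "0 \<le> A - 2 * ((A + 1) / (2 * B)) * B" using assms(1)[of "(A+1)/(2*B)"] True by simp
    also have "\<dots> = -1" using \<open>B > 0\<close> by (simp add: field_simps)
    finally show False by simp
  qed
next
  case False
  then have C: "C > 0" using assms(3) by simp
  have "0 \<le> A - 2 * (1/C) * B + (1/C)\<^sup>2 * B * C" using assms(1) .
  also have "\<dots> = A - B / C" using C by (simp add: field_simps power2_eq_square)
  finally show ?thesis using C by (simp add: field_simps)
qed

lemma positive_op_Cauchy_Schwarz:
  fixes T :: "'a::complex_inner \<Rightarrow> 'a"
  assumes T: "positive_op T"
  shows "(cmod (cinner y (T x)))\<^sup>2 \<le> Re (cinner y (T y)) * Re (cinner x (T x))"
proof -
  have b: "bounded_clinear T" using positive_opD[OF T] by simp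
  let ?b = "cinner y (T x)"
  have h: "cinner x (T y) = cnj ?b" by (rule positive_op_cinner_commute[OF T])
  have key: "0 \<le> Re (cinner y (T y)) - 2 * t * (cmod ?b)\<^sup>2 + t\<^sup>2 * (cmod ?b)\<^sup>2 * Re (cinner x (T x))" for t :: real
  proof -
    let ?s = "complex_of_real t * cnj ?b"
    have "cinner (y - ?s *\<^sub>C x) (T (y - ?s *\<^sub>C x))
        = cinner y (T y) - ?s * ?b - cnj ?s * cinner x (T y) + cnj ?s * ?s * cinner x (T x)"
      by (simp add: clinear_diff[OF b] bounded_clinearD(2)[OF b] cinner_diff_left cinner_diff_right
          cinner_scaleC_left cinner_scaleC_right algebra_simps)
    also have "\<dots> = cinner y (T y) - complex_of_real (2 * t * (cmod ?b)\<^sup>2)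
        + complex_of_real (t\<^sup>2 * (cmod ?b)\<^sup>2) * cinner x (T x)"
    proof -
      have n1: "cnj ?b * ?b = complex_of_real ((cmod ?b)\<^sup>2)"
        using complex_norm_square[of ?b] by (simp add: mult.commute)
      have "?s * ?b = complex_of_real t * (cnj ?b * ?b)" by (simp add: algebra_simps)
      also have "\<dots> = complex_of_real (t * (cmod ?b)\<^sup>2)" by (simp only: n1 of_real_mult)
      finally have a1: "?s * ?b = complex_of_real (t * (cmod ?b)\<^sup>2)" .
      have "cnj ?s * cinner x (T y) = complex_of_real t * (cnj ?b * ?b)" unfolding h by (simp add: algebra_simps)
      also have "\<dots> = complex_of_real (t * (cmod ?b)\<^sup>2)" by (simp only: n1 of_real_mult)
      finally have a2: "cnj ?s * cinner x (T y) = complex_of_real (t * (cmod ?b)\<^sup>2)" .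
      have "cnj ?s * ?s = complex_of_real t * complex_of_real t * (cnj ?b * ?b)" by (simp add: algebra_simps)
      also have "\<dots> = complex_of_real (t\<^sup>2 * (cmod ?b)\<^sup>2)" by (simp only: n1 of_real_mult power2_eq_square)
      finally have a3: "cnj ?s * ?s = complex_of_real (t\<^sup>2 * (cmod ?b)\<^sup>2)" .
      show ?thesis unfolding a1 a2 a3 by (simp add: algebra_simps)
    qed
    finally have "Re (cinner (y - ?s *\<^sub>C x) (T (y - ?s *\<^sub>C x)))
       = Re (cinner y (T y)) - 2 * t * (cmod ?b)\<^sup>2 + t\<^sup>2 * (cmod ?b)\<^sup>2 * Re (cinner x (T x))"
      by simp
    moreover have "0 \<le> Re (cinner (y - ?s *\<^sub>C x) (T (y - ?s *\<^sub>C x)))" using positive_opD(3)[OF T] .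
    ultimately show ?thesis by simp
  qed
  show ?thesis using nonneg_quadratic_imp_discriminant[OF key] positive_opD(3)[OF T] by simp
qed

lemma positive_id: "positive_op (id :: 'a::complex_inner \<Rightarrow> 'a)"
  unfolding positive_op_def nonneg_complex_def
  using bounded_clinear_id cinner_ge_zero by auto

lemma norm_cinner_le: "cmod (cinner x (y::'a::complex_inner)) \<le> norm x * norm y"
proof -
  have "(cmod (cinner x y))\<^sup>2 \<le> Re (cinner x x) * Re (cinner y y)"
    using positive_op_Cauchy_Schwarz[OF positive_id, of x y] by simp
  also have "\<dots> = (norm x * norm y)\<^sup>2" by (simp add: norm_sq_cinner power_mult_distrib)
  finally show ?thesis by (rule power2_le_imp_le) simp
qed

lemma bounded_linear_cinner_right: "bounded_linear (\<lambda>y. cinner (x::'a::complex_inner) y)"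
proof (rule bounded_linear_intro[where K="norm x"])
  show "cinner x (y + z) = cinner x y + cinner x z" for y z by (rule cinner_add_right)
  show "cinner x (r *\<^sub>R y) = r *\<^sub>R cinner x y" for r y by (simp add: cinner_scaleR_right scaleR_conv_of_real)
  show "norm (cinner x y) \<le> norm y * norm x" for y using norm_cinner_le[of x y] by (simp add: mult.commute)
qed

lemma bounded_bilinear_cinner: "bounded_bilinear (cinner :: 'a::complex_inner \<Rightarrow> 'a \<Rightarrow> complex)"
proof (rule bounded_bilinear.intro)
  show "cinner (a + a') b = cinner a b + cinner a' b" for a a' b :: 'a by (rule cinner_add_left)
  show "cinner a (b + b') = cinner a b + cinner a b'" for a b b' :: 'a by (rule cinner_add_right)
  show "cinner (r *\<^sub>R a) b = r *\<^sub>R cinner a b" for r and a b :: 'a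
    by (simp add: cinner_scaleR_left scaleR_conv_of_real)
  show "cinner a (r *\<^sub>R b) = r *\<^sub>R cinner a b" for r and a b :: 'a
    by (simp add: cinner_scaleR_right scaleR_conv_of_real)
  show "\<exists>K. \<forall>a b :: 'a. norm (cinner a b) \<le> norm a * norm b * K"
    by (rule exI[of _ 1]) (simp add: norm_cinner_le)
qed

lemma positive_op_form_zero_imp_zero:
  fixes T :: "'a::complex_inner \<Rightarrow> 'a"
  assumes T: "positive_op T" and q: "Re (cinner x (T x)) = 0"
  shows "T x = 0"
proof -
  have "(cmod (cinner (T x) (T x)))\<^sup>2 \<le> 0" using positive_op_Cauchy_Schwarz[OF T, of "T x" x] q by simp
  then have "cinner (T x) (T x) = 0" by simp
  then show ?thesis using cinner_eq_zero_iff by blast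
qed

lemma positive_op_norm_square_le:
  fixes T :: "'a::complex_inner \<Rightarrow> 'a"
  assumes T: "positive_op T"
  shows "(norm (T x))\<^sup>2 \<le> onorm T * Re (cinner x (T x))"
proof (cases "T x = 0")
  case True
  then show ?thesis using positive_opD(3)[OF T, of x] bounded_clinear_onorm_nonneg positive_opD(1)[OF T] by simp
next
  case False
  have b: "bounded_clinear T" using positive_opD[OF T] by simp
  have "cmod (cinner (T x) (T x)) = (norm (T x))\<^sup>2" by (simp only: cinner_self_real norm_of_real) simp
  then have "((norm (T x))\<^sup>2)\<^sup>2 = (cmod (cinner (T x) (T x)))\<^sup>2" by simp
  also have "\<dots> \<le> Re (cinner (T x) (T (T x))) * Re (cinner x (T x))" by (rule positive_op_Cauchy_Schwarz[OF T])
  also have "\<dots> \<le> (norm (T x) * (onorm T * norm (T x))) * Re (cinner x (T x))"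
  proof (rule mult_right_mono)
    have "Re (cinner (T x) (T (T x))) \<le> cmod (cinner (T x) (T (T x)))" by (rule complex_Re_le_cmod)
    also have "\<dots> \<le> norm (T x) * norm (T (T x))" by (rule norm_cinner_le)
    also have "\<dots> \<le> norm (T x) * (onorm T * norm (T x))"
      by (rule mult_left_mono) (auto intro: bounded_clinear_norm_le[OF b])
    finally show "Re (cinner (T x) (T (T x))) \<le> norm (T x) * (onorm T * norm (T x))" .
    show "0 \<le> Re (cinner x (T x))" using positive_opD(3)[OF T] .
  qed
  finally have "(norm (T x))\<^sup>2 * (norm (T x))\<^sup>2 \<le> (onorm T * Re (cinner x (T x))) * (norm (T x))\<^sup>2"
    by (simp add: power2_eq_square algebra_simps)
  moreover have "(norm (T x))\<^sup>2 > 0" using False by simp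
  ultimately show ?thesis by (meson mult_le_cancel_right_pos)
qed

lemma positive_op_scaleR: "positive_op R \<Longrightarrow> r \<ge> 0 \<Longrightarrow> positive_op (\<lambda>u. r *\<^sub>R R u)"
  unfolding positive_op_def nonneg_complex_def
  by (auto intro: bounded_clinear_scaleR simp: cinner_scaleR_right)

lemma op_le_positive:
  assumes A: "positive_op A" and le: "op_le A B"
  shows "positive_op B"
proof -
  have B: "bounded_clinear B" and D: "positive_op (\<lambda>u. B u - A u)"
    using le unfolding op_le_def by auto
  have "cinner u (B u) = cinner u (A u) + cinner u (B u - A u)" for u
    by (simp add: cinner_diff_right)
  then show ?thesis
    using B positive_opD(2,3)[OF A] positive_opD(2,3)[OF D]
    unfolding positive_op_def nonneg_complex_def by simp
qed

section \<open>Adjoints\<close>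

definition is_adjoint :: "('a::complex_inner \<Rightarrow> 'b::complex_inner) \<Rightarrow> ('b \<Rightarrow> 'a) \<Rightarrow> bool" where
  "is_adjoint f g \<longleftrightarrow> (\<forall>x y. cinner (f x) y = cinner x (g y))"

lemma cadj_eqI:
  assumes "is_adjoint f g"
  shows "cadj f = g"
proof -
  have "\<forall>x y. cinner (f x) y = cinner x (cadj f y)"
    unfolding cadj_def by (rule someI[of _ g]) (use assms is_adjoint_def in auto)
  then have "cadj f y = g y" for y
    using assms unfolding is_adjoint_def by (intro cinner_eq_all_left) metis
  then show ?thesis by auto
qed

lemma is_adjoint_comp: "is_adjoint f g \<Longrightarrow> is_adjoint f' g' \<Longrightarrow> is_adjoint (f \<circ> f') (g' \<circ> g)"
  unfolding is_adjoint_def by simp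

lemma is_adjoint_bounded_clinear:
  fixes f :: "'a::complex_inner \<Rightarrow> 'b::complex_inner"
  assumes f: "bounded_clinear f" and a: "is_adjoint f g"
  shows "bounded_clinear g"
proof -
  have add: "g (y + z) = g y + g z" for y z
    by (rule cinner_eq_all_left) (use a in \<open>metis is_adjoint_def cinner_add_right\<close>)
  have sc: "g (c *\<^sub>C y) = c *\<^sub>C g y" for c y
    by (rule cinner_eq_all_left) (use a in \<open>metis is_adjoint_def cinner_scaleC_right\<close>)
  have bnd: "norm (g y) \<le> norm y * onorm f" for y
  proof (cases "g y = 0")
    case True then show ?thesis using bounded_clinear_onorm_nonneg[OF f] by simp
  next
    case False
    have "(norm (g y))\<^sup>2 = Re (cinner (g y) (g y))" by (rule norm_sq_cinner)
    also have "\<dots> = Re (cinner (f (g y)) y)" using a unfolding is_adjoint_def by simp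
    also have "\<dots> \<le> cmod (cinner (f (g y)) y)" by (rule complex_Re_le_cmod)
    also have "\<dots> \<le> norm (f (g y)) * norm y" by (rule norm_cinner_le)
    also have "\<dots> \<le> (onorm f * norm (g y)) * norm y"
      by (rule mult_right_mono) (auto intro: bounded_clinear_norm_le[OF f])
    finally have "norm (g y) * norm (g y) \<le> (norm y * onorm f) * norm (g y)"
      by (simp add: power2_eq_square algebra_simps)
    then show ?thesis using False by simp
  qed
  have "bounded_linear g"
    by (rule bounded_linear_intro[where K="onorm f"])
      (auto simp: add scaleR_scaleC sc intro: bnd)
  then show ?thesis unfolding bounded_clinear_def using sc by auto
qed

lemma exists_linear_gain_over_quadratic:
  fixes M B V :: real
  assumes M: "M > 0" and B: "B > 0" and V: "V \<ge> 0"
  shows "\<exists>t>0. M\<^sup>2 * (1 + t\<^sup>2 * B * V) < (M + t * B)\<^sup>2"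
proof -
  define t where "t = 1 / (M * V + 1)"
  have MV: "M * V \<ge> 0" using M V by simp
  have t: "t > 0" unfolding t_def using MV by simp
  have "M\<^sup>2 * t * V = M * (M * V / (M * V + 1))" unfolding t_def by (simp add: power2_eq_square)
  also have "\<dots> < M * 1" using M MV by (intro mult_strict_left_mono) auto
  finally have "M\<^sup>2 * t * V < 2 * M + t * B" using M mult_pos_pos[OF t B] by linarith
  then have "(t * B) * (M\<^sup>2 * t * V) < (t * B) * (2 * M + t * B)"
    using t B by (intro mult_strict_left_mono) auto
  then have "M\<^sup>2 * (1 + t\<^sup>2 * B * V) < (M + t * B)\<^sup>2"
    by (simp add: power2_eq_square algebra_simps)
  then show ?thesis using t by blast
qed

lemma parallelogram_norm_diff_le:
  fixes y z :: "'a::complex_inner"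
  assumes y: "norm y \<le> 1" and z: "norm z \<le> 1" and d: "0 \<le> d" and sum: "2 - d < norm (y + z)"
  shows "(norm (y - z))\<^sup>2 \<le> 4 * d"
proof -
  have par: "(norm (y - z))\<^sup>2 = 2 * (norm y)\<^sup>2 + 2 * (norm z)\<^sup>2 - (norm (y + z))\<^sup>2"
    using norm_add_sq[of y z] norm_diff_sq[of y z] by simp
  have yz: "(norm y)\<^sup>2 \<le> 1" "(norm z)\<^sup>2 \<le> 1" using y z by (simp_all add: power_le_one)
  show ?thesis
  proof (cases "d \<le> 2")
    case True
    then have "(2 - d)\<^sup>2 \<le> (norm (y + z))\<^sup>2" using sum by (intro power_mono) auto
    moreover have "(2 - d)\<^sup>2 = 4 - 4 * d + d\<^sup>2" by (simp add: power2_eq_square algebra_simps)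
    ultimately show ?thesis using par yz zero_le_power2[of d] by linarith
  next
    case False
    then show ?thesis using par yz zero_le_power2[of "norm (y + z)"] by linarith
  qed
qed

lemma Cauchy_if_norm_diff_sq_le:
  fixes ys :: "nat \<Rightarrow> 'a::real_normed_vector"
  assumes C: "C > 0" and le: "\<And>m n. (norm (ys m - ys n))\<^sup>2 \<le> C * (1 / (real m + 1) + 1 / (real n + 1))"
  shows "Cauchy ys"
proof (rule metric_CauchyI)
  fix e :: real assume e: "e > 0"
  obtain N :: nat where N: "2 * C / e\<^sup>2 < real N" using reals_Archimedean2 by blast
  have "dist (ys m) (ys n) < e" if "m \<ge> N" "n \<ge> N" for m n
  proof -
    have inv_le: "1 / (real k + 1) \<le> 1 / (real N + 1)" if "k \<ge> N" for k
      using that by (intro divide_left_mono) auto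
    have "(norm (ys m - ys n))\<^sup>2 \<le> C * (1 / (real N + 1) + 1 / (real N + 1))"
      using le[of m n] inv_le[OF \<open>m \<ge> N\<close>] inv_le[OF \<open>n \<ge> N\<close>] C
      by (smt (verit) mult_left_mono)
    also have "\<dots> < e\<^sup>2"
      using N C e by (simp add: field_simps) (use zero_less_power[OF e, of 2] in linarith)
    finally show ?thesis using e by (simp add: dist_norm power_less_imp_less_base)
  qed
  then show "\<exists>N. \<forall>m\<ge>N. \<forall>n\<ge>N. dist (ys m) (ys n) < e" by blast
qed

lemma ex_rotation_to_real:
  fixes l :: "'a::complex_normed_vector \<Rightarrow> complex"
  assumes lsc: "\<And>c x. l (c *\<^sub>C x) = c * l x"
  shows "\<exists>y. norm y = norm x \<and> l y = complex_of_real (cmod (l x))"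
proof (cases "l x = 0")
  case False
  define y where "y = (cnj (l x) / complex_of_real (cmod (l x))) *\<^sub>C x"
  have "l y = cnj (l x) * l x / complex_of_real (cmod (l x))" by (simp add: y_def lsc)
  also have "\<dots> = complex_of_real (cmod (l x))"
    using False by (simp add: complex_norm_square[symmetric] mult.commute power2_eq_square)
  finally show ?thesis
    using False by (intro exI[of _ y]) (simp add: y_def complex_normed_vector_class.norm_scaleC norm_divide)
qed auto

lemma nearly_norming_norm_diff_le:
  fixes l :: "'a::complex_inner \<Rightarrow> complex"
  assumes ladd: "\<And>x y. l (x + y) = l x + l y" and M: "M > 0"
    and bound: "\<And>x. cmod (l x) \<le> M * norm x"
    and y: "norm y \<le> 1" "l y = complex_of_real a" "M - d1 < a"
    and z: "norm z \<le> 1" "l z = complex_of_real b" "M - d2 < b"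
  shows "(norm (y - z))\<^sup>2 \<le> (4 / M) * (d1 + d2)"
proof -
  have "\<bar>a\<bar> \<le> M" "\<bar>b\<bar> \<le> M"
    using bound[of y] bound[of z] mult_left_le[OF y(1) less_imp_le[OF M]]
      mult_left_le[OF z(1) less_imp_le[OF M]] y(2) z(2)
    by auto
  then have d: "0 \<le> (d1 + d2) / M" using y(3) z(3) M by simp
  have "a + b = Re (l (y + z))" using y(2) z(2) by (simp add: ladd)
  also have "\<dots> \<le> M * norm (y + z)" by (rule order_trans[OF complex_Re_le_cmod bound])
  finally have "a + b \<le> M * norm (y + z)" .
  moreover have "M * (2 - (d1 + d2) / M) = 2 * M - (d1 + d2)" using M by (simp add: right_diff_distrib)
  ultimately have "M * (2 - (d1 + d2) / M) < M * norm (y + z)" using y(3) z(3) by linarith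
  then have "2 - (d1 + d2) / M < norm (y + z)" using M by simp
  then have "(norm (y - z))\<^sup>2 \<le> 4 * ((d1 + d2) / M)"
    by (rule parallelogram_norm_diff_le[OF y(1) z(1) d])
  then show ?thesis by simp
qed

text \<open>Unit vectors on which \<open>l\<close> is nearly \<open>M\<close> are nearly equal by the parallelogram law, so they
  converge to a vector attaining \<open>M\<close>.\<close>
lemma ex_norming_vector:
  fixes l :: "'a::chilbert_space \<Rightarrow> complex"
  assumes ladd: "\<And>x y. l (x + y) = l x + l y" and lsc: "\<And>c x. l (c *\<^sub>C x) = c * l x"
    and lin: "bounded_linear l" and M: "M > 0" and bound: "\<And>x. cmod (l x) \<le> M * norm x"
    and least: "\<And>e. e > 0 \<Longrightarrow> \<exists>x. norm x \<le> 1 \<and> M - e < cmod (l x)"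
  obtains u where "norm u = 1" "l u = complex_of_real M"
proof -
  have "\<exists>y. norm y \<le> 1 \<and> l y = complex_of_real (cmod (l y)) \<and> M - 1 / (real n + 1) < cmod (l y)"
    for n
  proof -
    obtain x where x: "norm x \<le> 1" "M - 1 / (real n + 1) < cmod (l x)"
      using least[of "1 / (real n + 1)"] by auto
    obtain y where "norm y = norm x" "l y = complex_of_real (cmod (l x))"
      using ex_rotation_to_real[OF lsc] by blast
    then show ?thesis using x by (intro exI[of _ y]) auto
  qed
  then obtain ys where ys_norm: "\<And>n. norm (ys n) \<le> 1"
    and ys_real: "\<And>n. l (ys n) = complex_of_real (cmod (l (ys n)))"
    and ys_lo: "\<And>n. M - 1 / (real n + 1) < cmod (l (ys n))"
    by metis
  define a where "a n = cmod (l (ys n))" for n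
  have ys_l: "l (ys n) = complex_of_real (a n)" for n unfolding a_def by (rule ys_real)
  have a_lo: "M - 1 / (real n + 1) < a n" for n using ys_lo a_def by simp
  have a_hi: "a n \<le> M" for n
  proof -
    have "a n \<le> M * norm (ys n)" using bound a_def by simp
    also have "\<dots> \<le> M" using ys_norm[of n] M by (simp add: mult_left_le)
    finally show ?thesis .
  qed
  have "(norm (ys n - ys m))\<^sup>2 \<le> (4 / M) * (1 / (real n + 1) + 1 / (real m + 1))" for n m
    by (rule nearly_norming_norm_diff_le[OF ladd M bound ys_norm ys_l a_lo ys_norm ys_l a_lo])
  then have "Cauchy ys" using M by (intro Cauchy_if_norm_diff_sq_le[where C="4 / M"]) auto
  then obtain u where u: "ys \<longlonglongrightarrow> u" using Cauchy_convergent_iff convergent_def by blast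
  have "a \<longlonglongrightarrow> M"
  proof (rule real_tendsto_sandwich)
    have "(\<lambda>n. 1 / (real n + 1)) \<longlonglongrightarrow> 0"
      using LIMSEQ_inverse_real_of_nat by (simp add: inverse_eq_divide add.commute)
    then show "(\<lambda>n. M - 1 / (real n + 1)) \<longlonglongrightarrow> M"
      using tendsto_diff[OF tendsto_const, of _ 0 sequentially M] by simp
    show "eventually (\<lambda>n. M - 1 / (real n + 1) \<le> a n) sequentially"
      using a_lo by (simp add: less_imp_le)
    show "eventually (\<lambda>n. a n \<le> M) sequentially" by (simp add: a_hi)
  qed (rule tendsto_const)
  then have "(\<lambda>n. l (ys n)) \<longlonglongrightarrow> complex_of_real M"
    by (simp add: ys_l tendsto_of_real)
  moreover have "(\<lambda>n. l (ys n)) \<longlonglongrightarrow> l u" by (rule bounded_linear.tendsto[OF lin u])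
  ultimately have lu: "l u = complex_of_real M" using LIMSEQ_unique by blast
  have "norm u \<le> 1" using tendsto_norm[OF u] by (rule LIMSEQ_le_const2) (auto intro: ys_norm)
  moreover have "M \<le> M * norm u" using bound[of u] lu by simp
  ultimately have "norm u = 1" using M by simp
  then show ?thesis using lu that by blast
qed

lemma norming_vector_orthogonal:
  fixes l :: "'a::complex_inner \<Rightarrow> complex"
  assumes ladd: "\<And>x y. l (x + y) = l x + l y" and lsc: "\<And>c x. l (c *\<^sub>C x) = c * l x"
    and M: "M > 0" and bound: "\<And>x. cmod (l x) \<le> M * norm x"
    and u: "norm u = 1" "l u = complex_of_real M" and v: "cinner u v = 0"
  shows "l v = 0"
proof (rule ccontr)
  assume "l v \<noteq> 0"
  then have B: "(cmod (l v))\<^sup>2 > 0" by simp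
  obtain t where t: "t > 0"
    and gain: "M\<^sup>2 * (1 + t\<^sup>2 * (cmod (l v))\<^sup>2 * (norm v)\<^sup>2) < (M + t * (cmod (l v))\<^sup>2)\<^sup>2"
    using exists_linear_gain_over_quadratic[OF M B, of "(norm v)\<^sup>2"] by auto
  define w where "w = u + (complex_of_real t * cnj (l v)) *\<^sub>C v"
  have lw: "l w = complex_of_real (M + t * (cmod (l v))\<^sup>2)"
    unfolding w_def using ladd lsc u(2)
    by (simp add: complex_norm_square[symmetric] mult.commute mult.left_commute)
  have "M + t * (cmod (l v))\<^sup>2 \<le> M * norm w"
    using bound[of w] M t unfolding lw norm_of_real by simp
  then have "(M + t * (cmod (l v))\<^sup>2)\<^sup>2 \<le> (M * norm w)\<^sup>2"
    using M t by (intro power_mono) auto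
  moreover have "(norm w)\<^sup>2 = 1 + t\<^sup>2 * (cmod (l v))\<^sup>2 * (norm v)\<^sup>2"
    unfolding w_def norm_add_sq using u(1) t
    by (simp add: cinner_scaleC_right v complex_normed_vector_class.norm_scaleC power_mult_distrib norm_mult)
  ultimately show False using gain by (simp add: power_mult_distrib)
qed

lemma ex_least_norm_bound:
  fixes l :: "'a::real_normed_vector \<Rightarrow> complex"
  assumes lR: "\<And>r x. l (r *\<^sub>R x) = of_real r * l x"
    and lbnd: "\<And>x. cmod (l x) \<le> K * norm x" and x0: "l x0 \<noteq> 0"
  obtains M where "M > 0" "\<And>x. cmod (l x) \<le> M * norm x"
    "\<And>e. e > 0 \<Longrightarrow> \<exists>x. norm x \<le> 1 \<and> M - e < cmod (l x)"
proof -
  have l0: "l 0 = 0" using lR[of 0 0] by simp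
  define M where "M = Sup {cmod (l x) | x. norm x \<le> 1}"
  have "cmod (l x) \<le> \<bar>K\<bar>" if "norm x \<le> 1" for x
  proof -
    have "cmod (l x) \<le> \<bar>K\<bar> * norm x"
      using lbnd[of x] by (smt (verit) abs_ge_self mult_right_mono norm_ge_zero)
    also have "\<dots> \<le> \<bar>K\<bar>" using that by (simp add: mult_left_le)
    finally show ?thesis .
  qed
  then have bdd: "bdd_above {cmod (l x) | x. norm x \<le> 1}"
    by (intro bdd_aboveI[where M="\<bar>K\<bar>"]) auto
  have in_ball: "cmod (l x) \<le> M" if "norm x \<le> 1" for x
    unfolding M_def using that bdd by (intro cSup_upper) auto
  have bound: "cmod (l x) \<le> M * norm x" for x
  proof (cases "x = 0")
    case False
    have "cmod (l ((1 / norm x) *\<^sub>R x)) \<le> M" using False by (intro in_ball) simp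
    then show ?thesis using False by (simp add: lR norm_mult norm_divide field_simps)
  qed (simp add: l0)
  have least: "\<exists>x. norm x \<le> 1 \<and> M - e < cmod (l x)" if "e > 0" for e
  proof -
    have "M - e < M" using that by simp
    then show ?thesis unfolding M_def by (subst (asm) less_cSup_iff) (use bdd in \<open>auto intro: exI[of _ 0]\<close>)
  qed
  have "0 < cmod (l x0)" using x0 by simp
  also have "\<dots> \<le> M * norm x0" by (rule bound)
  finally have "M > 0" using in_ball[of 0] l0 by (simp add: zero_less_mult_iff)
  then show ?thesis using that bound least by blast
qed

lemma riesz_representation:
  fixes l :: "'a::chilbert_space \<Rightarrow> complex"
  assumes ladd: "\<And>x y. l (x + y) = l x + l y"
    and lsc: "\<And>c x. l (c *\<^sub>C x) = c * l x"
    and lbnd: "\<And>x. cmod (l x) \<le> K * norm x"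
  shows "\<exists>z. \<forall>x. l x = cinner z x"
proof (cases "\<forall>x. l x = 0")
  case True
  then show ?thesis by (intro exI[of _ 0]) simp
next
  case False
  then obtain x0 where x0: "l x0 \<noteq> 0" by blast
  have lR: "l (r *\<^sub>R x) = of_real r * l x" for r x by (simp add: scaleR_scaleC lsc)
  have lin: "bounded_linear l"
    by (rule bounded_linear_intro[where K=K]) (auto simp: ladd lR scaleR_conv_of_real mult.commute lbnd)
  obtain M where M: "M > 0" and bound: "\<And>x. cmod (l x) \<le> M * norm x"
    and least: "\<And>e. e > 0 \<Longrightarrow> \<exists>x. norm x \<le> 1 \<and> M - e < cmod (l x)"
    using ex_least_norm_bound[OF lR lbnd x0] by blast
  obtain u where u: "norm u = 1" "l u = complex_of_real M"
    using ex_norming_vector[OF ladd lsc lin M bound least] by blast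
  have uu: "cinner u u = 1" using cinner_self_real[of u] u(1) by simp
  show ?thesis
  proof (intro exI allI)
    fix x
    have "cinner u (x - cinner u x *\<^sub>C u) = 0"
      by (simp add: cinner_diff_right cinner_scaleC_right uu)
    then have "l (x - cinner u x *\<^sub>C u) = 0"
      by (rule norming_vector_orthogonal[OF ladd lsc M bound u])
    then have "l x = cinner u x * complex_of_real M"
      using ladd[of "x - cinner u x *\<^sub>C u" "cinner u x *\<^sub>C u"] by (simp add: lsc u(2))
    then show "l x = cinner (complex_of_real M *\<^sub>C u) x"
      by (simp add: cinner_scaleC_left mult.commute)
  qed
qed

lemma ex_adjoint:
  fixes f :: "'a::chilbert_space \<Rightarrow> 'b::chilbert_space"
  assumes f: "bounded_clinear f"
  shows "\<exists>g. is_adjoint f g"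
proof -
  have "\<exists>z. \<forall>x. cinner y (f x) = cinner z x" for y
  proof (rule riesz_representation)
    show "cinner y (f (x1 + x2)) = cinner y (f x1) + cinner y (f x2)" for x1 x2
      by (simp add: clinear_add[OF f] cinner_add_right)
    show "cinner y (f (c *\<^sub>C x)) = c * cinner y (f x)" for c x
      by (simp add: bounded_clinearD(2)[OF f] cinner_scaleC_right)
    show "cmod (cinner y (f x)) \<le> (norm y * onorm f) * norm x" for x
    proof -
      have "cmod (cinner y (f x)) \<le> norm y * norm (f x)" by (rule norm_cinner_le)
      also have "\<dots> \<le> norm y * (onorm f * norm x)" by (intro mult_left_mono bounded_clinear_norm_le[OF f]) auto
      finally show ?thesis by (simp add: mult.assoc)
    qed
  qed
  then obtain g where g: "\<And>y x. cinner y (f x) = cinner (g y) x" by metis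
  have "is_adjoint f g" unfolding is_adjoint_def
    by (metis g cinner_commute)
  then show ?thesis by blast
qed

lemma is_adjoint_cadj: "bounded_clinear (f :: 'a::chilbert_space \<Rightarrow> 'b::chilbert_space) \<Longrightarrow> is_adjoint f (cadj f)"
  using ex_adjoint cadj_eqI by metis

lemma cinner_cadj: "bounded_clinear (f :: 'a::chilbert_space \<Rightarrow> 'b::chilbert_space) \<Longrightarrow> cinner (f x) y = cinner x (cadj f y)"
  using is_adjoint_cadj unfolding is_adjoint_def by blast

lemma bounded_clinear_cadj: "bounded_clinear (f :: 'a::chilbert_space \<Rightarrow> 'b::chilbert_space) \<Longrightarrow> bounded_clinear (cadj f)"
  using is_adjoint_cadj is_adjoint_bounded_clinear by blast

section \<open>Square roots of positive operators\<close>

text \<open>Coefficients of \<open>p(z) = 1 - \<surd>(1 - z)\<close>, determined by \<open>p\<^sup>2 = 2p - z\<close>.\<close>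
function sqrt_coeff :: "nat \<Rightarrow> real" where
  "sqrt_coeff n = (if n = 0 then 0 else if n = 1 then 1/2 else (\<Sum>i\<in>{1..<n}. sqrt_coeff i * sqrt_coeff (n - i)) / 2)"
  by auto
termination
  by (relation "Wellfounded.measure id") auto
declare sqrt_coeff.simps [simp del]

lemma sqrt_coeff_0 [simp]: "sqrt_coeff 0 = 0" by (simp add: sqrt_coeff.simps)

lemma sqrt_coeff_1 [simp]: "sqrt_coeff 1 = 1/2" by (simp add: sqrt_coeff.simps)

lemma sqrt_coeff_Suc0 [simp]: "sqrt_coeff (Suc 0) = 1/2" using sqrt_coeff_1 by simp

lemma sqrt_coeff_rec: "n \<ge> 2 \<Longrightarrow> sqrt_coeff n = (\<Sum>i\<in>{1..<n}. sqrt_coeff i * sqrt_coeff (n - i)) / 2"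
  by (subst sqrt_coeff.simps) simp

lemma sqrt_coeff_nonneg: "sqrt_coeff n \<ge> 0"
proof (induction n rule: less_induct)
  case (less n)
  show ?case
  proof (cases "n \<ge> 2")
    case True
    have "(\<Sum>i\<in>{1..<n}. sqrt_coeff i * sqrt_coeff (n - i)) \<ge> 0"
      by (intro sum_nonneg mult_nonneg_nonneg less) auto
    then show ?thesis using sqrt_coeff_rec[OF True] by simp
  next
    case False
    then have "n = 0 \<or> n = 1" by auto
    then show ?thesis by auto
  qed
qed

lemma sqrt_coeff_convolution: "(\<Sum>i\<le>n. sqrt_coeff i * sqrt_coeff (n - i)) = 2 * sqrt_coeff n - (if n = 1 then 1 else 0)"
proof (cases "n \<ge> 2")
  case True
  have "{..n} = {0} \<union> {1..<n} \<union> {n}" using True by auto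
  then have "(\<Sum>i\<le>n. sqrt_coeff i * sqrt_coeff (n - i)) = sqrt_coeff 0 * sqrt_coeff n + (\<Sum>i\<in>{1..<n}. sqrt_coeff i * sqrt_coeff (n - i)) + sqrt_coeff n * sqrt_coeff 0"
    using True by (simp add: sum.union_disjoint)
  also have "\<dots> = 2 * sqrt_coeff n" using sqrt_coeff_rec[OF True] by simp
  finally show ?thesis using True by simp
next
  case False
  then have "n = 0 \<or> n = 1" by auto
  then show ?thesis by (auto simp: atMost_Suc)
qed

lemma sum_sqrt_coeff_le_square:
  assumes N: "N \<ge> 2"
  shows "2 * (\<Sum>k<N. sqrt_coeff k) - 1 \<le> (\<Sum>k<N - 1. sqrt_coeff k)\<^sup>2"
proof -
  let ?c = "\<lambda>(i, j). sqrt_coeff i * sqrt_coeff j"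
  have "(\<Sum>k<N. (if k = 1 then 1 else 0 :: real)) = 1" using N by (simp add: sum.delta)
  then have "2 * (\<Sum>k<N. sqrt_coeff k) - 1 = (\<Sum>k<N. \<Sum>i\<le>k. sqrt_coeff i * sqrt_coeff (k - i))"
    by (simp add: sqrt_coeff_convolution sum_subtractf sum_distrib_left)
  also have "\<dots> = sum ?c {(i, j). i + j < N}"
    by (rule sum.triangle_reindex[symmetric])
  also have "\<dots> = sum ?c ({(i, j). i + j < N} \<inter> ({..<N - 1} \<times> {..<N - 1}))"
  proof (rule sum.mono_neutral_right)
    show "finite {(i, j). i + j < N}"
      by (rule finite_subset[of _ "{..<N} \<times> {..<N}"]) auto
    show "\<forall>x\<in>{(i, j). i + j < N} - {(i, j). i + j < N} \<inter> ({..<N - 1} \<times> {..<N - 1}). ?c x = 0"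
    proof clarify
      fix i j assume "i + j < N" "(i, j) \<notin> {(i, j). i + j < N} \<inter> ({..<N - 1} \<times> {..<N - 1})"
      then have "i = 0 \<or> j = 0" by auto
      then show "sqrt_coeff i * sqrt_coeff j = 0" by auto
    qed
  qed auto
  also have "\<dots> \<le> sum ?c ({..<N - 1} \<times> {..<N - 1})"
    by (intro sum_mono2) (auto intro: mult_nonneg_nonneg sqrt_coeff_nonneg)
  also have "\<dots> = (\<Sum>k<N - 1. sqrt_coeff k)\<^sup>2"
    by (simp add: power2_eq_square sum_product sum.cartesian_product)
  finally show ?thesis .
qed

lemma sum_sqrt_coeff_le_1: "(\<Sum>k<N. sqrt_coeff k) \<le> 1"
proof (induction N rule: less_induct)
  case (less N)
  show ?case
  proof (cases "N \<ge> 2")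
    case True
    have "(\<Sum>k<N - 1. sqrt_coeff k)\<^sup>2 \<le> 1"
      using less True sum_nonneg[of "{..<N - 1}" sqrt_coeff] sqrt_coeff_nonneg
      by (simp add: power_le_one)
    then show ?thesis using sum_sqrt_coeff_le_square[OF True] by simp
  next
    case False
    then have "N = 0 \<or> N = 1" by auto
    then show ?thesis by auto
  qed
qed

lemma summable_sqrt_coeff: "summable sqrt_coeff"
  by (rule summableI_nonneg_bounded[where x=1]) (auto intro: sqrt_coeff_nonneg sum_sqrt_coeff_le_1)

lemma suminf_sqrt_coeff_le_1: "suminf sqrt_coeff \<le> 1"
  by (rule suminf_le_const[OF summable_sqrt_coeff sum_sqrt_coeff_le_1])

lemma Cauchy_product_sums_bilinear:
  fixes prod :: "'a::banach \<Rightarrow> 'b::banach \<Rightarrow> 'c::banach"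
  assumes bb: "bounded_bilinear prod"
    and pn: "\<And>x y. norm (prod x y) \<le> norm x * norm y"
    and a: "summable (\<lambda>k. norm (a k))"
    and b: "summable (\<lambda>k. norm (b k))"
  shows "(\<lambda>k. \<Sum>i\<le>k. prod (a i) (b (k - i))) sums (prod (\<Sum>k. a k) (\<Sum>k. b k))"
proof -
  interpret bounded_bilinear prod by (rule bb)
  let ?g = "\<lambda>(i, j). prod (a i) (b j)" and ?f = "\<lambda>(i, j). norm (a i) * norm (b j)"
  let ?sq = "\<lambda>n::nat. {..<n} \<times> {..<n}" and ?tri = "\<lambda>n::nat. {(i, j). i + j < n}"
  have tri_sq: "?tri n \<subseteq> ?sq n" for n by auto
  have sq: "prod (\<Sum>k<n. a k) (\<Sum>k<n. b k) = sum ?g (?sq n)" for n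
    unfolding sum_left by (simp add: sum_right sum.cartesian_product)
  have "(\<lambda>n. prod (\<Sum>k<n. a k) (\<Sum>k<n. b k)) \<longlonglongrightarrow> prod (\<Sum>k. a k) (\<Sum>k. b k)"
    by (intro tendsto summable_LIMSEQ summable_norm_cancel[OF a] summable_norm_cancel[OF b])
  then have sq_g: "(\<lambda>n. sum ?g (?sq n)) \<longlonglongrightarrow> prod (\<Sum>k. a k) (\<Sum>k. b k)"
    by (simp only: sq)
  have "(\<lambda>n. (\<Sum>k<n. norm (a k)) * (\<Sum>k<n. norm (b k))) \<longlonglongrightarrow> (\<Sum>k. norm (a k)) * (\<Sum>k. norm (b k))"
    using a b by (intro tendsto_mult summable_LIMSEQ)
  then have sq_f: "(\<lambda>n. sum ?f (?sq n)) \<longlonglongrightarrow> (\<Sum>k. norm (a k)) * (\<Sum>k. norm (b k))"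
    by (simp only: sum_product sum.Sigma[rule_format] finite_lessThan)
  have "(\<lambda>k. \<Sum>i\<le>k. norm (a i) * norm (b (k - i))) sums ((\<Sum>k. norm (a k)) * (\<Sum>k. norm (b k)))"
    using a b by (intro Cauchy_product_sums) simp_all
  then have tri_f: "(\<lambda>n. sum ?f (?tri n)) \<longlonglongrightarrow> (\<Sum>k. norm (a k)) * (\<Sum>k. norm (b k))"
    by (simp only: sums_def sum.triangle_reindex)
  have est: "norm (sum ?g (?sq n) - sum ?g (?tri n)) \<le> sum ?f (?sq n) - sum ?f (?tri n)" for n
  proof -
    have "norm (sum ?g (?sq n) - sum ?g (?tri n)) = norm (sum ?g (?sq n - ?tri n))"
      by (simp add: sum_diff tri_sq)
    also have "\<dots> \<le> sum ?f (?sq n - ?tri n)"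
      by (rule order_trans[OF norm_sum sum_mono]) (auto simp: pn)
    also have "\<dots> = sum ?f (?sq n) - sum ?f (?tri n)" by (simp add: sum_diff tri_sq)
    finally show ?thesis .
  qed
  have "(\<lambda>n. sum ?f (?sq n) - sum ?f (?tri n)) \<longlonglongrightarrow> 0"
    using tendsto_diff[OF sq_f tri_f] by simp
  then have "(\<lambda>n. sum ?g (?sq n) - sum ?g (?tri n)) \<longlonglongrightarrow> 0"
    by (rule Lim_null_comparison[OF always_eventually, rotated]) (use est in blast)
  with sq_g have "(\<lambda>n. sum ?g (?tri n)) \<longlonglongrightarrow> prod (\<Sum>k. a k) (\<Sum>k. b k)"
    by (rule Lim_transform2)
  then show ?thesis by (simp only: sums_def sum.triangle_reindex)
qed

text \<open>\<open>sqrt_series C = I - \<surd>(I - C)\<close>.\<close>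
definition sqrt_series :: "('a::banach \<Rightarrow> 'a) \<Rightarrow> 'a \<Rightarrow> 'a" where
  "sqrt_series C x = (\<Sum>k. sqrt_coeff k *\<^sub>R (C ^^ k) x)"

definition contraction :: "('a::complex_normed_vector \<Rightarrow> 'a) \<Rightarrow> bool" where
  "contraction C \<longleftrightarrow> bounded_clinear C \<and> (\<forall>x. norm (C x) \<le> norm x)"

lemma bounded_clinear_funpow: "bounded_clinear (C::'a::complex_normed_vector\<Rightarrow>'a) \<Longrightarrow> bounded_clinear (C ^^ k)"
  by (induction k) (auto simp: bounded_clinear_id comp_def intro: bounded_clinear_compose)

lemma norm_funpow_le: "(\<And>x. norm ((C::'a::real_normed_vector\<Rightarrow>'a) x) \<le> norm x) \<Longrightarrow> norm ((C ^^ k) x) \<le> norm x"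
  by (induction k) (auto intro: order_trans simp: funpow.simps)

lemma funpow_intertwine:
  assumes "\<And>x. L (C1 x) = C2 (L x)"
  shows "L ((C1 ^^ k) x) = (C2 ^^ k) (L x)"
  by (induction k) (auto simp: assms funpow.simps)

lemma summable_norm_sqrt_series:
  fixes C :: "'a::banach \<Rightarrow> 'a"
  assumes "\<And>x. norm (C x) \<le> norm x"
  shows "summable (\<lambda>k. norm (sqrt_coeff k *\<^sub>R (C ^^ k) x))"
proof (rule summable_comparison_test[where g="\<lambda>k. sqrt_coeff k * norm x"])
  show "\<exists>N. \<forall>n\<ge>N. norm (norm (sqrt_coeff n *\<^sub>R (C ^^ n) x)) \<le> sqrt_coeff n * norm x"
    using norm_funpow_le[OF assms] sqrt_coeff_nonneg by (auto intro!: mult_left_mono)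
  show "summable (\<lambda>k. sqrt_coeff k * norm x)" by (intro summable_mult2 summable_sqrt_coeff)
qed

lemma summable_sqrt_series:
  fixes C :: "'a::banach \<Rightarrow> 'a"
  assumes "\<And>x. norm (C x) \<le> norm x"
  shows "summable (\<lambda>k. sqrt_coeff k *\<^sub>R (C ^^ k) x)"
  using summable_norm_cancel[OF summable_norm_sqrt_series[OF assms]] .

lemma norm_sqrt_series_le:
  fixes C :: "'a::banach \<Rightarrow> 'a"
  assumes "\<And>x. norm (C x) \<le> norm x"
  shows "norm (sqrt_series C x) \<le> norm x"
proof -
  have "norm (sqrt_series C x) \<le> (\<Sum>k. norm (sqrt_coeff k *\<^sub>R (C ^^ k) x))"
    unfolding sqrt_series_def by (rule summable_norm[OF summable_norm_sqrt_series[OF assms]])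
  also have "\<dots> \<le> (\<Sum>k. sqrt_coeff k * norm x)"
    using norm_funpow_le[OF assms] sqrt_coeff_nonneg
    by (intro suminf_le summable_norm_sqrt_series[OF assms] summable_mult2 summable_sqrt_coeff)
       (auto intro!: mult_left_mono)
  also have "\<dots> = suminf sqrt_coeff * norm x" by (rule suminf_mult2[OF summable_sqrt_coeff, symmetric])
  also have "\<dots> \<le> 1 * norm x" by (intro mult_right_mono suminf_sqrt_coeff_le_1) auto
  finally show ?thesis by simp
qed

lemma sqrt_series_intertwine:
  fixes C1 :: "'a::banach \<Rightarrow> 'a" and C2 :: "'b::banach \<Rightarrow> 'b"
  assumes L: "bounded_linear L" and c1: "\<And>x. norm (C1 x) \<le> norm x"
    and i: "\<And>x. L (C1 x) = C2 (L x)"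
  shows "L (sqrt_series C1 x) = sqrt_series C2 (L x)"
proof -
  have "L (sqrt_series C1 x) = (\<Sum>k. L (sqrt_coeff k *\<^sub>R (C1 ^^ k) x))"
    unfolding sqrt_series_def by (rule bounded_linear.suminf[OF L summable_sqrt_series[OF c1]])
  also have "\<dots> = sqrt_series C2 (L x)"
    unfolding sqrt_series_def using linear_scale[OF bounded_linear.linear[OF L]] funpow_intertwine[of L C1 C2, OF i] by simp
  finally show ?thesis .
qed

lemma sqrt_series_add:
  fixes C :: "'a::{complex_normed_vector,banach} \<Rightarrow> 'a"
  assumes C: "contraction C"
  shows "sqrt_series C (x + y) = sqrt_series C x + sqrt_series C y"
proof -
  have c1: "\<And>x. norm (C x) \<le> norm x" using C contraction_def by auto
  have lin: "(C ^^ k) (x + y) = (C ^^ k) x + (C ^^ k) y" for k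
    using bounded_clinear_funpow[of C k] C contraction_def clinear_add by blast
  show ?thesis unfolding sqrt_series_def
    by (simp add: lin scaleR_add_right suminf_add[OF summable_sqrt_series[OF c1] summable_sqrt_series[OF c1]])
qed

lemma bounded_clinear_sqrt_series:
  fixes C :: "'a::{complex_normed_vector,banach} \<Rightarrow> 'a"
  assumes C: "contraction C"
  shows "bounded_clinear (sqrt_series C)"
proof -
  have c1: "\<And>x. norm (C x) \<le> norm x" using C contraction_def by auto
  have bC: "bounded_clinear C" using C contraction_def by auto
  have sR: "sqrt_series C (r *\<^sub>R x) = r *\<^sub>R sqrt_series C x" for r x
    using sqrt_series_intertwine[of "\<lambda>x. r *\<^sub>R x" C C x, OF bounded_linear_scaleR_right c1]
      clinear_scaleR[OF bC] by simp
  have sC: "sqrt_series C (c *\<^sub>C x) = c *\<^sub>C sqrt_series C x" for c x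
    using sqrt_series_intertwine[of "\<lambda>x. c *\<^sub>C x" C C x, OF bounded_linear_scaleC c1]
      bounded_clinearD(2)[OF bC] by simp
  have "bounded_linear (sqrt_series C)"
    by (rule bounded_linear_intro[where K=1]) (auto simp: sqrt_series_add[OF C] sR norm_sqrt_series_le[OF c1])
  then show ?thesis unfolding bounded_clinear_def using sC by auto
qed

lemma sqrt_coeff_series_square:
  fixes B :: "nat \<Rightarrow> 'a::banach \<Rightarrow>\<^sub>L 'a"
  assumes norm_B: "\<And>k. norm (B k) \<le> 1" and mult_B: "\<And>i j. B i o\<^sub>L B j = B (i + j)"
  shows "(\<Sum>k. sqrt_coeff k *\<^sub>R B k) o\<^sub>L (\<Sum>k. sqrt_coeff k *\<^sub>R B k)
       = 2 *\<^sub>R (\<Sum>k. sqrt_coeff k *\<^sub>R B k) - B 1"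
proof -
  define A where "A k = sqrt_coeff k *\<^sub>R B k" for k
  have "norm (A k) \<le> sqrt_coeff k" for k
    unfolding A_def using norm_B[of k] sqrt_coeff_nonneg[of k] by (simp add: mult_left_le)
  then have Asn: "summable (\<lambda>k. norm (A k))"
    by (intro summable_comparison_test[OF _ summable_sqrt_coeff]) auto
  have "A i o\<^sub>L A (n - i) = (sqrt_coeff i * sqrt_coeff (n - i)) *\<^sub>R B n" if "i \<le> n" for i n
    using that mult_B[of i "n - i"]
    by (simp add: A_def bounded_bilinear.scaleR_left[OF bounded_bilinear_blinfun_compose]
        bounded_bilinear.scaleR_right[OF bounded_bilinear_blinfun_compose])
  then have "(\<Sum>i\<le>n. A i o\<^sub>L A (n - i)) = (\<Sum>i\<le>n. sqrt_coeff i * sqrt_coeff (n - i)) *\<^sub>R B n" for n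
    by (simp add: scaleR_sum_left)
  then have "(\<lambda>n. (2 * sqrt_coeff n - (if n = 1 then 1 else 0)) *\<^sub>R B n) sums (suminf A o\<^sub>L suminf A)"
    using Cauchy_product_sums_bilinear[OF bounded_bilinear_blinfun_compose norm_blinfun_compose Asn Asn]
    by (simp add: sqrt_coeff_convolution)
  moreover have "(\<lambda>n. (2 * sqrt_coeff n - (if n = 1 then 1 else 0)) *\<^sub>R B n) sums (2 *\<^sub>R suminf A - B 1)"
  proof -
    have "(\<lambda>n. 2 *\<^sub>R A n - (if n = 1 then B 1 else 0)) sums (2 *\<^sub>R suminf A - B 1)"
      by (intro sums_diff sums_scaleR_right summable_sums summable_norm_cancel[OF Asn] sums_single)
    moreover have "2 *\<^sub>R A n - (if n = 1 then B 1 else 0) = (2 * sqrt_coeff n - (if n = 1 then 1 else 0)) *\<^sub>R B n" for n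
      unfolding A_def by (simp add: algebra_simps)
    ultimately show ?thesis by simp
  qed
  ultimately show ?thesis unfolding A_def by (rule sums_unique2)
qed

lemma sqrt_series_square:
  fixes C :: "'a::{complex_normed_vector,banach} \<Rightarrow> 'a"
  assumes C: "contraction C"
  shows "sqrt_series C (sqrt_series C x) = 2 *\<^sub>R sqrt_series C x - C x"
proof -
  have c1: "\<And>x. norm (C x) \<le> norm x" using C contraction_def by auto
  have bC: "bounded_clinear C" using C contraction_def by auto
  have lin: "bounded_linear (C ^^ k)" for k using bounded_clinear_funpow[OF bC] bounded_clinearD(1) by blast
  define B where "B k = Blinfun (C ^^ k)" for k
  have B_apply: "blinfun_apply (B k) = C ^^ k" for k
    unfolding B_def by (rule bounded_linear_Blinfun_apply[OF lin])
  have norm_B: "norm (B k) \<le> 1" for k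
    by (rule norm_blinfun_bound) (auto simp: B_apply norm_funpow_le[OF c1])
  moreover have "B i o\<^sub>L B j = B (i + j)" for i j
    by (rule blinfun_eqI) (simp add: B_apply funpow_add)
  ultimately have square: "(\<Sum>k. sqrt_coeff k *\<^sub>R B k) o\<^sub>L (\<Sum>k. sqrt_coeff k *\<^sub>R B k)
       = 2 *\<^sub>R (\<Sum>k. sqrt_coeff k *\<^sub>R B k) - B 1"
    by (rule sqrt_coeff_series_square)
  have series: "blinfun_apply (\<Sum>k. sqrt_coeff k *\<^sub>R B k) y = sqrt_series C y" for y
  proof -
    have "norm (sqrt_coeff k *\<^sub>R B k) \<le> sqrt_coeff k" for k
      using norm_B[of k] sqrt_coeff_nonneg[of k] by (simp add: mult_left_le)
    then have "summable (\<lambda>k. norm (sqrt_coeff k *\<^sub>R B k))"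
      by (intro summable_comparison_test[OF _ summable_sqrt_coeff]) auto
    then have "blinfun_apply (\<Sum>k. sqrt_coeff k *\<^sub>R B k) y = (\<Sum>k. blinfun_apply (sqrt_coeff k *\<^sub>R B k) y)"
      by (rule bounded_linear.suminf[OF blinfun.bounded_linear_left summable_norm_cancel])
    then show ?thesis by (simp add: sqrt_series_def B_apply blinfun.scaleR_left)
  qed
  show ?thesis
    using arg_cong[OF square, of "\<lambda>F. blinfun_apply F x"]
    by (simp add: series B_apply blinfun.diff_left blinfun.scaleR_left)
qed

lemma contractionD: "contraction C \<Longrightarrow> norm (C x) \<le> norm x"
  unfolding contraction_def by simp

definition series_sqrt :: "real \<Rightarrow> ('a::chilbert_space \<Rightarrow> 'a) \<Rightarrow> 'a \<Rightarrow> 'a" where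
  "series_sqrt e T x = (1 / sqrt e) *\<^sub>R (x - sqrt_series (\<lambda>y. y - e *\<^sub>R T y) x)"

definition admissible_scale :: "real \<Rightarrow> ('a::chilbert_space \<Rightarrow> 'a) \<Rightarrow> bool" where
  "admissible_scale e T \<longleftrightarrow> positive_op T \<and> e > 0 \<and> e * onorm T \<le> 1"

lemma admissible_scale_exists: "positive_op T \<Longrightarrow> admissible_scale (1 / (onorm T + 1)) T"
proof -
  assume T: "positive_op T"
  have o: "onorm T \<ge> 0" using bounded_clinear_onorm_nonneg positive_opD(1)[OF T] by blast
  then show ?thesis unfolding admissible_scale_def using T by (simp add: field_simps)
qed

lemma admissible_scale_common: "positive_op T1 \<Longrightarrow> positive_op T2 \<Longrightarrow>
    admissible_scale (1 / (onorm T1 + onorm T2 + 1)) T1 \<and> admissible_scale (1 / (onorm T1 + onorm T2 + 1)) T2"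
proof -
  assume T1: "positive_op T1" and T2: "positive_op T2"
  have o1: "onorm T1 \<ge> 0" using bounded_clinear_onorm_nonneg positive_opD(1)[OF T1] by blast
  have o2: "onorm T2 \<ge> 0" using bounded_clinear_onorm_nonneg positive_opD(1)[OF T2] by blast
  show ?thesis unfolding admissible_scale_def using T1 T2 o1 o2 by (simp add: field_simps)
qed

lemma contraction_id_minus_scaled:
  fixes T :: "'a::chilbert_space \<Rightarrow> 'a"
  assumes v: "admissible_scale e T"
  shows "contraction (\<lambda>y. y - e *\<^sub>R T y)"
proof -
  have T: "positive_op T" and e: "e > 0" and eo: "e * onorm T \<le> 1" using v admissible_scale_def by auto
  have bT: "bounded_clinear T" using positive_opD(1)[OF T] .
  have bc: "bounded_clinear (\<lambda>y. y - e *\<^sub>R T y)"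
    by (intro bounded_clinear_diff bounded_clinear_ident bounded_clinear_scaleR bT)
  have "norm (y - e *\<^sub>R T y) \<le> norm y" for y
  proof -
    define q where "q = Re (cinner y (T y))"
    have q0: "q \<ge> 0" unfolding q_def using positive_opD(3)[OF T] .
    have "(norm (y - e *\<^sub>R T y))\<^sup>2 = (norm y)\<^sup>2 + (norm (e *\<^sub>R T y))\<^sup>2 - 2 * Re (cinner y (e *\<^sub>R T y))"
      by (rule norm_diff_sq)
    also have "\<dots> = (norm y)\<^sup>2 + e\<^sup>2 * (norm (T y))\<^sup>2 - 2 * e * q"
      using e by (simp add: cinner_scaleR_right q_def power_mult_distrib)
    also have "\<dots> \<le> (norm y)\<^sup>2 + e\<^sup>2 * (onorm T * q) - 2 * e * q"
      using positive_op_norm_square_le[OF T, of y] unfolding q_def[symmetric] by (simp add: mult_left_mono)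
    also have "\<dots> = (norm y)\<^sup>2 + e * (e * onorm T) * q - 2 * e * q" by (simp add: power2_eq_square)
    also have "\<dots> \<le> (norm y)\<^sup>2 + e * 1 * q - 2 * e * q"
      using eo e q0 by (intro add_right_mono diff_right_mono add_left_mono mult_right_mono mult_left_mono) auto
    also have "\<dots> \<le> (norm y)\<^sup>2" using e q0 by simp
    finally show ?thesis by (rule power2_le_imp_le) simp
  qed
  then show ?thesis unfolding contraction_def using bc by auto
qed

lemma bounded_clinear_series_sqrt:
  assumes v: "admissible_scale e T"
  shows "bounded_clinear (series_sqrt e T)"
proof -
  have "bounded_clinear (\<lambda>x. (1 / sqrt e) *\<^sub>R (x - sqrt_series (\<lambda>y. y - e *\<^sub>R T y) x))"
    by (intro bounded_clinear_scaleR bounded_clinear_diff bounded_clinear_ident bounded_clinear_sqrt_series contraction_id_minus_scaled v)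
  then show ?thesis unfolding series_sqrt_def[abs_def] .
qed

lemma series_sqrt_square:
  assumes v: "admissible_scale e T"
  shows "series_sqrt e T (series_sqrt e T x) = T x"
proof -
  let ?C = "\<lambda>y. y - e *\<^sub>R T y"
  let ?S = "sqrt_series ?C"
  have e: "e > 0" using v admissible_scale_def by auto
  have C: "contraction ?C" by (rule contraction_id_minus_scaled[OF v])
  have bS: "bounded_clinear ?S" by (rule bounded_clinear_sqrt_series[OF C])
  have "series_sqrt e T (series_sqrt e T x) = (1 / sqrt e) *\<^sub>R ((1 / sqrt e) *\<^sub>R (x - ?S x) - ?S ((1 / sqrt e) *\<^sub>R (x - ?S x)))"
    unfolding series_sqrt_def ..
  also have "\<dots> = (1 / sqrt e * (1 / sqrt e)) *\<^sub>R (x - ?S x - ?S x + ?S (?S x))"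
    by (simp add: clinear_scaleR[OF bS] clinear_diff[OF bS] algebra_simps)
  also have "\<dots> = (1 / e) *\<^sub>R (x - ?C x)"
  proof -
    have "x - ?S x - ?S x + ?S (?S x) = x - ?C x" by (simp add: sqrt_series_square[OF C] scaleR_2)
    moreover have "1 / sqrt e * (1 / sqrt e) = 1 / e" using e by (simp add: real_sqrt_mult[symmetric])
    ultimately show ?thesis by simp
  qed
  also have "\<dots> = T x" using e by simp
  finally show ?thesis .
qed

lemma is_adjoint_id_minus_scaled:
  assumes v: "admissible_scale e T"
  shows "is_adjoint (\<lambda>y. y - e *\<^sub>R T y) (\<lambda>y. y - e *\<^sub>R T y)"
proof -
  have T: "positive_op T" using v admissible_scale_def by auto
  show ?thesis unfolding is_adjoint_def
    by (simp add: cinner_diff_left cinner_diff_right cinner_scaleR_left cinner_scaleR_right positive_op_selfadjoint[OF T])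
qed

lemma is_adjoint_funpow: "is_adjoint C C \<Longrightarrow> is_adjoint (C ^^ k) (C ^^ k)"
proof (induction k)
  case 0 then show ?case by (simp add: is_adjoint_def)
next
  case (Suc k)
  have "is_adjoint (C \<circ> C ^^ k) (C ^^ k \<circ> C)" by (rule is_adjoint_comp[OF Suc.prems Suc.IH[OF Suc.prems]])
  then show ?case by (simp add: funpow_swap1 funpow.simps comp_def)
qed

lemma cinner_sqrt_series_real_le:
  fixes C :: "'a::chilbert_space \<Rightarrow> 'a"
  assumes c1: "\<And>x. norm (C x) \<le> norm x" and sa: "is_adjoint C C"
  obtains s where "cinner x (sqrt_series C x) = complex_of_real s" "s \<le> (norm x)\<^sup>2"
proof -
  define r where "r k = Re (cinner x ((C ^^ k) x))" for k
  have im: "cinner x ((C ^^ k) x) = complex_of_real (r k)" for k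
  proof -
    have "cinner x ((C ^^ k) x) = cinner ((C ^^ k) x) x"
      using is_adjoint_funpow[OF sa, of k] unfolding is_adjoint_def by metis
    also have "\<dots> = cnj (cinner x ((C ^^ k) x))" by (rule cinner_commute)
    finally show ?thesis unfolding r_def by (simp add: complex_eq_iff)
  qed
  have rabs: "\<bar>r k\<bar> \<le> (norm x)\<^sup>2" for k
  proof -
    have "\<bar>r k\<bar> \<le> cmod (cinner x ((C ^^ k) x))" unfolding r_def by (rule abs_Re_le_cmod)
    also have "\<dots> \<le> norm x * norm ((C ^^ k) x)" by (rule norm_cinner_le)
    also have "\<dots> \<le> norm x * norm x" by (intro mult_left_mono norm_funpow_le c1) auto
    finally show ?thesis by (simp add: power2_eq_square)
  qed
  have sr: "summable (\<lambda>k. sqrt_coeff k * r k)"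
  proof (rule summable_comparison_test[where g="\<lambda>k. sqrt_coeff k * (norm x)\<^sup>2"])
    show "\<exists>N. \<forall>n\<ge>N. norm (sqrt_coeff n * r n) \<le> sqrt_coeff n * (norm x)\<^sup>2"
      using rabs sqrt_coeff_nonneg by (auto simp: abs_mult intro!: mult_left_mono)
    show "summable (\<lambda>k. sqrt_coeff k * (norm x)\<^sup>2)" by (intro summable_mult2 summable_sqrt_coeff)
  qed
  have "cinner x (sqrt_series C x) = (\<Sum>k. cinner x (sqrt_coeff k *\<^sub>R (C ^^ k) x))"
    unfolding sqrt_series_def
    by (rule bounded_linear.suminf[OF bounded_linear_cinner_right summable_sqrt_series[OF c1]])
  also have "\<dots> = (\<Sum>k. complex_of_real (sqrt_coeff k * r k))" by (simp add: cinner_scaleR_right im)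
  also have "\<dots> = complex_of_real (\<Sum>k. sqrt_coeff k * r k)" by (rule suminf_of_real[OF sr, symmetric])
  finally have s1: "cinner x (sqrt_series C x) = complex_of_real (\<Sum>k. sqrt_coeff k * r k)" .
  have "(\<Sum>k. sqrt_coeff k * r k) \<le> (\<Sum>k. sqrt_coeff k * (norm x)\<^sup>2)"
    using rabs sqrt_coeff_nonneg
    by (intro suminf_le sr summable_mult2 summable_sqrt_coeff) (auto intro: mult_left_mono abs_le_D1)
  also have "\<dots> = suminf sqrt_coeff * (norm x)\<^sup>2" by (rule suminf_mult2[OF summable_sqrt_coeff, symmetric])
  also have "\<dots> \<le> 1 * (norm x)\<^sup>2" by (intro mult_right_mono suminf_sqrt_coeff_le_1) auto
  finally show ?thesis using s1 that by simp
qed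

lemma positive_op_series_sqrt:
  assumes v: "admissible_scale e T"
  shows "positive_op (series_sqrt e T)"
proof -
  let ?C = "\<lambda>y. y - e *\<^sub>R T y"
  have e: "e > 0" using v admissible_scale_def by auto
  have c1: "\<And>x. norm (?C x) \<le> norm x" by (rule contractionD[OF contraction_id_minus_scaled[OF v]])
  have "nonneg_complex (cinner x (series_sqrt e T x))" for x
  proof -
    obtain s where s: "cinner x (sqrt_series ?C x) = complex_of_real s" "s \<le> (norm x)\<^sup>2"
      using cinner_sqrt_series_real_le[OF c1 is_adjoint_id_minus_scaled[OF v]] by blast
    have "cinner x (series_sqrt e T x) = complex_of_real ((1 / sqrt e) * ((norm x)\<^sup>2 - s))"
      unfolding series_sqrt_def by (simp add: cinner_scaleR_right cinner_diff_right s(1) cinner_self_real)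
    then show ?thesis unfolding nonneg_complex_def using s(2) e by simp
  qed
  then show ?thesis unfolding positive_op_def using bounded_clinear_series_sqrt[OF v] by auto
qed

lemma series_sqrt_intertwine:
  fixes L :: "'a::chilbert_space \<Rightarrow> 'b::chilbert_space"
  assumes v1: "admissible_scale e T1" and v2: "admissible_scale e T2" and L: "bounded_linear L"
    and i: "\<And>x. L (T1 x) = T2 (L x)"
  shows "L (series_sqrt e T1 x) = series_sqrt e T2 (L x)"
proof -
  let ?C1 = "\<lambda>y. y - e *\<^sub>R T1 y" and ?C2 = "\<lambda>y. y - e *\<^sub>R T2 y"
  have c1: "\<And>x. norm (?C1 x) \<le> norm x" by (rule contractionD[OF contraction_id_minus_scaled[OF v1]])
  have lin: "L (a - b) = L a - L b" "L (r *\<^sub>R a) = r *\<^sub>R L a" for a b r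
    using L by (auto simp: linear_diff linear_scale bounded_linear.linear)
  have ic: "L (?C1 y) = ?C2 (L y)" for y by (simp add: lin i)
  show ?thesis unfolding series_sqrt_def using sqrt_series_intertwine[of L ?C1 ?C2 x, OF L c1 ic] by (simp add: lin)
qed

lemma series_sqrt_unique:
  fixes T :: "'a::chilbert_space \<Rightarrow> 'a"
  assumes v: "admissible_scale e T" and B: "positive_op B" and BB: "\<And>x. B (B x) = T x"
  shows "B = series_sqrt e T"
proof
  fix x
  let ?R = "series_sqrt e T"
  have R: "positive_op ?R" by (rule positive_op_series_sqrt[OF v])
  have bB: "bounded_clinear B" using positive_opD(1)[OF B] .
  have bR: "bounded_clinear ?R" using positive_opD(1)[OF R] .
  have vB: "admissible_scale e T" using v .
  have comm: "B (?R z) = ?R (B z)" for z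
    by (rule series_sqrt_intertwine[OF v v bounded_clinearD(1)[OF bB]]) (simp add: BB[symmetric])
  define y where "y = ?R x - B x"
  have "?R y + B y = 0"
    unfolding y_def by (simp add: clinear_diff[OF bB] clinear_diff[OF bR] series_sqrt_square[OF v] BB comm)
  then have "cinner y (?R y) + cinner y (B y) = 0" by (metis cinner_add_right cinner_zero_right)
  then have "Re (cinner y (?R y)) + Re (cinner y (B y)) = 0" by (metis plus_complex.sel(1) zero_complex.sel(1))
  moreover have "Re (cinner y (?R y)) \<ge> 0" "Re (cinner y (B y)) \<ge> 0"
    using positive_opD(3)[OF R] positive_opD(3)[OF B] by auto
  ultimately have "Re (cinner y (?R y)) = 0" "Re (cinner y (B y)) = 0" by auto
  then have Ry: "?R y = 0" and By: "B y = 0" using positive_op_form_zero_imp_zero[OF R] positive_op_form_zero_imp_zero[OF B] by auto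
  have "cinner y y = cinner (?R x) y - cinner (B x) y" unfolding y_def by (simp add: cinner_diff_left)
  also have "\<dots> = cinner x (?R y) - cinner x (B y)" by (simp add: positive_op_selfadjoint[OF R] positive_op_selfadjoint[OF B])
  also have "\<dots> = 0" by (simp add: Ry By)
  finally have "y = 0" using cinner_eq_zero_iff by blast
  then show "B x = ?R x" unfolding y_def by simp
qed

lemma op_sqrt_eq_series_sqrt:
  assumes v: "admissible_scale e T"
  shows "op_sqrt T = series_sqrt e T"
  unfolding op_sqrt_def
proof (rule the_equality)
  show "positive_op (series_sqrt e T) \<and> series_sqrt e T \<circ> series_sqrt e T = T"
    using positive_op_series_sqrt[OF v] series_sqrt_square[OF v] by auto
  show "\<And>R. positive_op R \<and> R \<circ> R = T \<Longrightarrow> R = series_sqrt e T"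
    using series_sqrt_unique[OF v] by (metis comp_apply)
qed

lemma positive_op_sqrt: "positive_op T \<Longrightarrow> positive_op (op_sqrt (T::'a::chilbert_space \<Rightarrow> 'a))"
  using op_sqrt_eq_series_sqrt[OF admissible_scale_exists] positive_op_series_sqrt[OF admissible_scale_exists] by metis

lemma op_sqrt_square: "positive_op T \<Longrightarrow> op_sqrt T (op_sqrt T x) = (T::'a::chilbert_space \<Rightarrow> 'a) x"
  using op_sqrt_eq_series_sqrt[OF admissible_scale_exists] series_sqrt_square[OF admissible_scale_exists] by metis

lemma op_sqrt_unique:
  "positive_op (T::'a::chilbert_space \<Rightarrow> 'a) \<Longrightarrow> positive_op R \<Longrightarrow> (\<And>x. R (R x) = T x) \<Longrightarrow> op_sqrt T = R"
  using op_sqrt_eq_series_sqrt[OF admissible_scale_exists] series_sqrt_unique[OF admissible_scale_exists] by metis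

lemma op_sqrt_intertwine:
  fixes L :: "'a::chilbert_space \<Rightarrow> 'b::chilbert_space"
  assumes T1: "positive_op T1" and T2: "positive_op T2" and L: "bounded_linear L"
    and i: "\<And>x. L (T1 x) = T2 (L x)"
  shows "L (op_sqrt T1 x) = op_sqrt T2 (L x)"
proof -
  define e where "e = 1 / (onorm T1 + onorm T2 + 1)"
  have v1: "admissible_scale e T1" and v2: "admissible_scale e T2" using admissible_scale_common[OF T1 T2] e_def by auto
  show ?thesis using series_sqrt_intertwine[OF v1 v2 L i] op_sqrt_eq_series_sqrt[OF v1] op_sqrt_eq_series_sqrt[OF v2] by simp
qed

lemma op_sqrt_id: "op_sqrt (id :: 'a::chilbert_space \<Rightarrow> 'a) = id"
  by (rule op_sqrt_unique[OF positive_id positive_id]) simp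

lemma op_sqrt_scaleR:
  fixes T :: "'a::chilbert_space \<Rightarrow> 'a"
  assumes T: "positive_op T" and r: "r \<ge> 0"
  shows "op_sqrt (\<lambda>u. r *\<^sub>R T u) = (\<lambda>u. sqrt r *\<^sub>R op_sqrt T u)"
proof (rule op_sqrt_unique[OF positive_op_scaleR[OF T r] positive_op_scaleR[OF positive_op_sqrt[OF T]]])
  show "0 \<le> sqrt r" using r by simp
  have b: "bounded_clinear (op_sqrt T)" using positive_opD(1)[OF positive_op_sqrt[OF T]] .
  show "sqrt r *\<^sub>R op_sqrt T (sqrt r *\<^sub>R op_sqrt T x) = r *\<^sub>R T x" for x
    using r by (simp add: clinear_scaleR[OF b] op_sqrt_square[OF T])
qed

lemma vanishing_on_closure_cspan:
  fixes F :: "'a::complex_normed_vector \<Rightarrow> complex"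
  assumes add: "\<And>x y. F (x + y) = F x + F y" and sc: "\<And>c x. F (c *\<^sub>C x) = c * F x"
    and cont: "continuous_on UNIV F" and van: "\<And>g. g \<in> G \<Longrightarrow> F g = 0"
    and x: "x \<in> closure (cspan G)"
  shows "F x = 0"
proof -
  have F0: "F 0 = 0" using add[of 0 0] by simp
  have Fsum: "F (sum f A) = (\<Sum>a\<in>A. F (f a))" for f and A :: "'b set"
    by (induction A rule: infinite_finite_induct) (auto simp: F0 add)
  have "cspan G \<subseteq> {x. F x = 0}"
  proof
    fix y assume "y \<in> cspan G"
    then obtain S c where "finite S" "S \<subseteq> G" "y = (\<Sum>v\<in>S. c v *\<^sub>C v)" unfolding cspan_def by auto
    then show "y \<in> {x. F x = 0}" by (auto simp: Fsum sc intro!: sum.neutral van)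
  qed
  moreover have "closed {x. F x = 0}"
  proof -
    have "\<And>x. isCont F x" using cont by (simp add: continuous_on_eq_continuous_within)
    from continuous_closed_vimage[OF closed_singleton[of 0] this] show ?thesis by (simp add: vimage_def)
  qed
  ultimately have "closure (cspan G) \<subseteq> {x. F x = 0}" by (rule closure_minimal)
  then show ?thesis using x by auto
qed

lemma cspan_range_obtain:
  assumes "w \<in> cspan (range g)"
  obtains I c where "finite I" "w = (\<Sum>i\<in>I. c i *\<^sub>C g i)"
proof -
  obtain F c where F: "finite F" "F \<subseteq> range g" "w = (\<Sum>v\<in>F. c v *\<^sub>C v)"
    using assms unfolding cspan_def by auto
  from F(2) obtain I where I: "inj_on g I" "F = g ` I" unfolding subset_image_inj by blast
  have "finite I" using F(1) I by (simp add: finite_image_iff)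
  moreover have "w = (\<Sum>i\<in>I. c (g i) *\<^sub>C g i)" using F(3) I by (simp add: sum.reindex)
  ultimately show ?thesis by (rule that)
qed

lemma cspan_image_subset:
  assumes J: "bounded_clinear J"
  shows "cspan (J ` G) \<subseteq> J ` cspan G"
proof
  fix y assume "y \<in> cspan (J ` G)"
  then obtain F c where F: "finite F" "F \<subseteq> J ` G" "y = (\<Sum>v\<in>F. c v *\<^sub>C v)"
    unfolding cspan_def by auto
  from F(2) obtain C where C: "C \<subseteq> G" "inj_on J C" "F = J ` C" unfolding subset_image_inj by blast
  have "finite C" using F(1) C by (simp add: finite_image_iff)
  have "y = (\<Sum>u\<in>C. c (J u) *\<^sub>C J u)" using F(3) C by (simp add: sum.reindex)
  also have "\<dots> = J (\<Sum>u\<in>C. c (J u) *\<^sub>C u)"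
    by (simp add: clinear_sum[OF J] bounded_clinearD(2)[OF J])
  finally have "y = J (\<Sum>u\<in>C. c (J u) *\<^sub>C u)" .
  moreover have "(\<Sum>u\<in>C. c (J u) *\<^sub>C u) \<in> cspan G"
    unfolding cspan_def using \<open>finite C\<close> C(1) by (auto intro!: exI[of _ C] exI[of _ "\<lambda>u. c (J u)"])
  ultimately show "y \<in> J ` cspan G" by blast
qed

lemma isometry_closure_imageD:
  fixes J :: "'a::real_normed_vector \<Rightarrow> 'b::real_normed_vector"
  assumes J: "linear J" and iso: "\<And>u. norm (J u) = norm u" and w: "J w \<in> closure (J ` A)"
  shows "w \<in> closure A"
proof -
  obtain s where s: "\<And>n. s n \<in> J ` A" "s \<longlonglongrightarrow> J w" using w closure_sequential by blast
  then have "\<forall>n. \<exists>u. u \<in> A \<and> s n = J u" by blast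
  then obtain t where t: "\<And>n. t n \<in> A" "\<And>n. s n = J (t n)" by metis
  have "dist (t n) w = dist (s n) (J w)" for n
    by (simp add: t(2) dist_norm linear_diff[OF J, symmetric] iso)
  then have "t \<longlonglongrightarrow> w" using s(2) by (simp only: tendsto_dist_iff[of t] tendsto_dist_iff[of s])
  then show ?thesis using t(1) closure_sequential by blast
qed

lemma positive_op_if_dense_cspan:
  fixes S :: "'a::complex_inner \<Rightarrow> 'a"
  assumes S: "bounded_clinear S" and dense: "closure (cspan G) = UNIV"
    and nonneg: "\<And>w. w \<in> cspan G \<Longrightarrow> nonneg_complex (cinner w (S w))"
  shows "positive_op S"
proof -
  have "continuous_on UNIV (\<lambda>w. cinner w (S w))"
    by (rule bounded_bilinear.continuous_on[OF bounded_bilinear_cinner continuous_on_id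
          linear_continuous_on[OF bounded_clinearD(1)[OF S]]])
  then have "closed {w. nonneg_complex (cinner w (S w))}"
    unfolding nonneg_complex_def
    by (intro closed_Collect_conj closed_Collect_eq closed_Collect_le continuous_on_Im
        continuous_on_Re continuous_on_const)
  then have "closure (cspan G) \<subseteq> {w. nonneg_complex (cinner w (S w))}"
    using nonneg by (intro closure_minimal) auto
  then show ?thesis unfolding positive_op_def using S dense by auto
qed

lemma nonneg_cinner_cspan_gram:
  fixes S :: "'a::complex_inner \<Rightarrow> 'a" and b :: "'i \<Rightarrow> 'b::complex_inner"
  assumes S: "bounded_clinear S"
    and gram: "\<And>i j. cinner (g i) (S (g j)) = cinner (b i) (b j)"
    and w: "w \<in> cspan (range g)"
  shows "nonneg_complex (cinner w (S w))"
proof -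
  obtain I c where w: "w = (\<Sum>i\<in>I. c i *\<^sub>C g i)" using cspan_range_obtain[OF w] by blast
  have "cinner w (S w) = (\<Sum>j\<in>I. \<Sum>i\<in>I. c j * (cnj (c i) * cinner (g i) (S (g j))))"
    unfolding w by (simp add: clinear_sum[OF S] bounded_clinearD(2)[OF S] cinner_sum_left
        cinner_sum_right cinner_scaleC_left cinner_scaleC_right sum_distrib_left mult.assoc)
  also have "\<dots> = cinner (\<Sum>i\<in>I. c i *\<^sub>C b i) (\<Sum>i\<in>I. c i *\<^sub>C b i)"
    by (simp add: gram cinner_sum_left cinner_sum_right cinner_scaleC_left cinner_scaleC_right
        sum_distrib_left mult.assoc)
  finally show ?thesis unfolding nonneg_complex_def by (simp add: cinner_self_real)
qed

section \<open>The Stinespring construction of a completely positive map\<close>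

locale stinespring_construction =
  fixes act :: "'x \<Rightarrow> 'a::cstar_algebra \<Rightarrow> 'x"
    and ip :: "'x \<Rightarrow> 'x \<Rightarrow> 'a"
    and Phi :: "'x \<Rightarrow> 'h::chilbert_space \<Rightarrow> 'k::chilbert_space"
    and \<phi> :: "'a \<Rightarrow> 'h \<Rightarrow> 'h"
    and \<pi>\<phi> :: "'a \<Rightarrow> 'hp::chilbert_space \<Rightarrow> 'hp"
    and V :: "'h \<Rightarrow> 'hp"
    and J :: "'kp::chilbert_space \<Rightarrow> 'k"
    and W :: "'k \<Rightarrow> 'kp"
    and \<pi>Phi :: "'x \<Rightarrow> 'hp \<Rightarrow> 'kp"
  assumes ip_act: "ip x (act y a) = ip x y * a"
    and Phi_bounded: "bounded_clinear (Phi x)"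
    and Phi_gram: "cadj (Phi x) \<circ> Phi y = \<phi> (ip x y)"
    and \<pi>\<phi>_rep: "star_rep \<pi>\<phi>"
    and V_bounded: "bounded_clinear V"
    and \<phi>_dilation: "\<phi> a = cadj V \<circ> \<pi>\<phi> a \<circ> V"
    and minimal: "closure (cspan {\<pi>\<phi> a (V h) | a h. True}) = UNIV"
    and J_bounded: "bounded_clinear J"
    and J_isometry: "cinner (J u) (J v) = cinner u v"
    and J_range: "range J = closure (cspan {Phi x h | x h. True})"
    and \<pi>Phi_rep: "module_rep ip \<pi>Phi \<pi>\<phi>"
    and \<pi>Phi_\<pi>\<phi>_V: "J (\<pi>Phi x (\<pi>\<phi> a (V h))) = Phi (act x a) h"
    and W_proj: "is_orth_proj (range J) k (J (W k))"
begin

lemma \<pi>\<phi>_bounded: "bounded_clinear (\<pi>\<phi> a)"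
  using \<pi>\<phi>_rep by (simp add: star_rep_def)

lemma \<pi>\<phi>_mult: "\<pi>\<phi> (a * b) u = \<pi>\<phi> a (\<pi>\<phi> b u)"
  using \<pi>\<phi>_rep by (simp add: star_rep_def)

lemma \<pi>Phi_bounded: "bounded_clinear (\<pi>Phi x)"
  using \<pi>Phi_rep by (simp add: module_rep_def)

lemma cadj_\<pi>Phi_\<pi>Phi: "cadj (\<pi>Phi x) (\<pi>Phi y u) = \<pi>\<phi> (ip x y) u"
  using \<pi>Phi_rep by (simp add: module_rep_def comp_def fun_eq_iff)

lemma cinner_\<pi>Phi: "cinner (\<pi>Phi x u) (\<pi>Phi y v) = cinner u (\<pi>\<phi> (ip x y) v)"
  by (simp add: cinner_cadj[OF \<pi>Phi_bounded] cadj_\<pi>Phi_\<pi>Phi)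

lemma cinner_Phi: "cinner (Phi x h) (Phi y k) = cinner (V h) (\<pi>\<phi> (ip x y) (V k))"
proof -
  have "cinner (Phi x h) (Phi y k) = cinner h (\<phi> (ip x y) k)"
    using cinner_cadj[OF Phi_bounded] Phi_gram by (metis comp_apply)
  then show ?thesis by (simp add: \<phi>_dilation cinner_cadj[OF V_bounded])
qed

lemma is_adjoint_W_J: "is_adjoint W J"
  unfolding is_adjoint_def
proof (intro allI)
  fix k u
  have "cinner (J u) (k - J (W k)) = 0" using W_proj unfolding is_orth_proj_def by auto
  then have "cinner k (J u) = cinner (J (W k)) (J u)"
    by (metis cinner_commute cinner_diff_right eq_iff_diff_eq_0)
  then show "cinner (W k) u = cinner k (J u)" by (simp add: J_isometry)
qed

lemma cinner_J_W: "cinner (J u) k = cinner u (W k)"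
  using is_adjoint_W_J by (simp add: is_adjoint_def cinner_commute[of "J u"] cinner_commute[of u])

lemma cadj_W: "cadj W = J"
  by (rule cadj_eqI[OF is_adjoint_W_J])

lemma W_J: "W (J u) = u"
  by (rule cinner_eq_all_left) (simp add: cinner_J_W[symmetric] J_isometry)

lemma J_\<pi>Phi_V: "J (\<pi>Phi x (V h)) = Phi x h"
proof -
  let ?F = "\<lambda>u. cinner (Phi x h) (J (\<pi>Phi x u)) - cinner (V h) (\<pi>\<phi> (ip x x) u)"
  have J\<pi>: "bounded_clinear (\<lambda>u. J (\<pi>Phi x u))"
    by (rule bounded_clinear_compose[OF J_bounded \<pi>Phi_bounded])
  have "?F (V h) = 0"
  proof (rule vanishing_on_closure_cspan[where G="{\<pi>\<phi> a (V h) | a h. True}" and F="?F"])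
    show "?F (u + v) = ?F u + ?F v" for u v
      by (simp add: clinear_add[OF J\<pi>] clinear_add[OF \<pi>\<phi>_bounded] cinner_add_right)
    show "?F (c *\<^sub>C u) = c * ?F u" for c u
      by (simp add: bounded_clinearD(2)[OF J\<pi>] bounded_clinearD(2)[OF \<pi>\<phi>_bounded]
          cinner_scaleC_right algebra_simps)
    have "bounded_linear (\<lambda>u. cinner (Phi x h) (J (\<pi>Phi x u)))"
      by (rule bounded_linear_compose[OF bounded_linear_cinner_right bounded_clinearD(1)[OF J\<pi>]])
    moreover have "bounded_linear (\<lambda>u. cinner (V h) (\<pi>\<phi> (ip x x) u))"
      by (rule bounded_linear_compose[OF bounded_linear_cinner_right bounded_clinearD(1)[OF \<pi>\<phi>_bounded]])
    ultimately show "continuous_on UNIV ?F"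
      by (intro linear_continuous_on bounded_linear_sub)
    show "?F g = 0" if "g \<in> {\<pi>\<phi> a (V h) | a h. True}" for g
      using that by (auto simp: \<pi>Phi_\<pi>\<phi>_V cinner_Phi ip_act \<pi>\<phi>_mult)
    show "V h \<in> closure (cspan {\<pi>\<phi> a (V h) | a h. True})" using minimal by simp
  qed
  then have PQ: "cinner (Phi x h) (J (\<pi>Phi x (V h))) = cinner (Phi x h) (Phi x h)"
    by (simp add: cinner_Phi)
  have real: "cnj (cinner (Phi x h) (Phi x h)) = cinner (Phi x h) (Phi x h)"
    by (rule cinner_commute[symmetric])
  have QP: "cinner (J (\<pi>Phi x (V h))) (Phi x h) = cinner (Phi x h) (Phi x h)"
    using PQ real cinner_commute[of "J (\<pi>Phi x (V h))" "Phi x h"] by simp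
  have QQ: "cinner (J (\<pi>Phi x (V h))) (J (\<pi>Phi x (V h))) = cinner (Phi x h) (Phi x h)"
    by (simp add: J_isometry cinner_\<pi>Phi cinner_Phi)
  have "cinner (Phi x h - J (\<pi>Phi x (V h))) (Phi x h - J (\<pi>Phi x (V h))) = 0"
    by (simp add: cinner_diff_left cinner_diff_right PQ QP QQ)
  then have "Phi x h - J (\<pi>Phi x (V h)) = 0" using cinner_eq_zero_iff by blast
  then show ?thesis by simp
qed

lemma closure_cspan_\<pi>Phi_V: "closure (cspan {\<pi>Phi x (V h) | x h. True}) = UNIV"
proof -
  let ?G = "{\<pi>Phi x (V h) | x h. True}"
  have J_linear: "linear J" by (rule bounded_linear.linear[OF bounded_clinearD(1)[OF J_bounded]])
  have J_norm: "norm (J u) = norm u" for u by (simp add: norm_eq_sqrt_cinner J_isometry)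
  have "{Phi x h | x h. True} = J ` ?G" by (auto simp flip: J_\<pi>Phi_V)
  then have "cspan {Phi x h | x h. True} \<subseteq> J ` cspan ?G"
    using cspan_image_subset[OF J_bounded] by simp
  then have "range J \<subseteq> closure (J ` cspan ?G)" unfolding J_range by (rule closure_mono)
  then have "w \<in> closure (cspan ?G)" for w
    by (intro isometry_closure_imageD[OF J_linear J_norm]) auto
  then show ?thesis by auto
qed

lemma Phi_op_id: "Phi_op W V \<pi>Phi id id = Phi"
  by (simp add: Phi_op_def op_sqrt_id cadj_W comp_def J_\<pi>Phi_V fun_eq_iff)

lemma Phi_op_scaleR:
  assumes T: "positive_op T" and S: "positive_op S" and r: "r > 0"
  shows "Phi_op W V \<pi>Phi (\<lambda>u. r *\<^sub>R T u) (\<lambda>u. r *\<^sub>R S u) = (\<lambda>x h. r *\<^sub>R Phi_op W V \<pi>Phi T S x h)"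
proof -
  have "sqrt r * sqrt r = r" using r by simp
  then show ?thesis
    using r unfolding Phi_op_def op_sqrt_scaleR[OF T less_imp_le[OF r]] op_sqrt_scaleR[OF S less_imp_le[OF r]] cadj_W
    by (simp add: fun_eq_iff clinear_scaleR[OF J_bounded] clinear_scaleR[OF \<pi>Phi_bounded]
        clinear_scaleR[OF positive_opD(1)[OF positive_op_sqrt[OF S]]])
qed

lemma in_commutantD:
  assumes "in_commutant \<pi>Phi T S"
  shows "bounded_clinear S" "\<pi>Phi x (T u) = S (\<pi>Phi x u)" "cadj (\<pi>Phi x) (S k) = T (cadj (\<pi>Phi x) k)"
  using assms unfolding in_commutant_def by (auto simp: fun_eq_iff)

lemma in_commutant_commute_\<pi>\<phi>:
  assumes "in_commutant \<pi>Phi T S"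
  shows "T (\<pi>\<phi> (ip x y) u) = \<pi>\<phi> (ip x y) (T u)"
  by (metis assms in_commutantD(2,3) cadj_\<pi>Phi_\<pi>Phi)

lemma in_commutant_commute_\<pi>\<phi>_sqrt:
  assumes C: "in_commutant \<pi>Phi T S" and T: "positive_op T"
  shows "op_sqrt T (\<pi>\<phi> (ip x y) u) = \<pi>\<phi> (ip x y) (op_sqrt T u)"
  by (rule op_sqrt_intertwine[OF T T bounded_clinearD(1)[OF \<pi>\<phi>_bounded], symmetric])
    (rule in_commutant_commute_\<pi>\<phi>[OF C, symmetric])

lemma in_commutant_positive:
  assumes C: "in_commutant \<pi>Phi T S" and T: "positive_op T"
  shows "positive_op S"
proof -
  let ?R = "op_sqrt T"
  let ?g = "\<lambda>(x, h). \<pi>Phi x (V h)" and ?b = "\<lambda>(x, h). \<pi>Phi x (?R (V h))"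
  have gram: "cinner (?g i) (S (?g j)) = cinner (?b i) (?b j)" for i j
  proof -
    obtain x1 h1 x2 h2 where ij: "i = (x1, h1)" "j = (x2, h2)" by (cases i, cases j)
    have "cinner (\<pi>Phi x1 (V h1)) (S (\<pi>Phi x2 (V h2))) = cinner (V h1) (\<pi>\<phi> (ip x1 x2) (?R (?R (V h2))))"
      by (simp add: in_commutantD(2)[OF C, symmetric] cinner_\<pi>Phi op_sqrt_square[OF T])
    also have "\<dots> = cinner (\<pi>Phi x1 (?R (V h1))) (\<pi>Phi x2 (?R (V h2)))"
      by (simp add: in_commutant_commute_\<pi>\<phi>_sqrt[OF C T, symmetric] cinner_\<pi>Phi
          positive_op_selfadjoint[OF positive_op_sqrt[OF T]])
    finally show ?thesis by (simp add: ij)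
  qed
  have "{\<pi>Phi x (V h) | x h. True} = range ?g" by auto
  then have dense: "closure (cspan (range ?g)) = UNIV" using closure_cspan_\<pi>Phi_V by simp
  show ?thesis
    by (rule positive_op_if_dense_cspan[OF in_commutantD(1)[OF C] dense])
      (rule nonneg_cinner_cspan_gram[where g="?g" and b="?b", OF in_commutantD(1)[OF C] gram])
qed

text \<open>With \<open>P, Q\<close> the fourth roots of \<open>T, S\<close> we have \<open>\<Phi>_{\<surd>T}(x) = J Q \<pi>_\<Phi>(x) P V\<close>; since
  \<open>Q\<^sup>2 \<pi>_\<Phi>(x) = \<pi>_\<Phi>(x) P\<^sup>2\<close> and \<open>P\<close> commutes with \<open>\<pi>_\<phi>(\<langle>x,x\<rangle>)\<close>, the Gram operator collapses.\<close>
lemma Phi_op_sqrt_gram: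
  assumes C: "in_commutant \<pi>Phi T S" and T: "positive_op T"
  shows "cadj (Phi_op W V \<pi>Phi (op_sqrt T) (op_sqrt S) x) \<circ> Phi_op W V \<pi>Phi (op_sqrt T) (op_sqrt S) x
       = (\<lambda>h. cadj V (\<pi>\<phi> (ip x x) (T (V h))))"
proof -
  have S: "positive_op S" by (rule in_commutant_positive[OF C T])
  let ?R = "op_sqrt T" and ?P = "op_sqrt (op_sqrt T)" and ?Q = "op_sqrt (op_sqrt S)"
  have R: "positive_op ?R" by (rule positive_op_sqrt[OF T])
  have P: "positive_op ?P" by (rule positive_op_sqrt[OF R])
  have RS: "positive_op (op_sqrt S)" by (rule positive_op_sqrt[OF S])
  have Q: "positive_op ?Q" by (rule positive_op_sqrt[OF RS])
  have \<pi>Phi_R: "\<pi>Phi x (?R u) = op_sqrt S (\<pi>Phi x u)" for u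
    by (rule op_sqrt_intertwine[OF T S bounded_clinearD(1)[OF \<pi>Phi_bounded]])
      (rule in_commutantD(2)[OF C])
  have P_\<pi>\<phi>: "?P (\<pi>\<phi> (ip x x) u) = \<pi>\<phi> (ip x x) (?P u)" for u
    by (rule op_sqrt_intertwine[OF R R bounded_clinearD(1)[OF \<pi>\<phi>_bounded], symmetric])
      (rule in_commutant_commute_\<pi>\<phi>_sqrt[OF C T, symmetric])
  have PRP: "?P (?R (?P u)) = T u" for u
    by (metis op_sqrt_square R T)
  let ?F = "Phi_op W V \<pi>Phi (op_sqrt T) (op_sqrt S) x"
  let ?G = "\<lambda>k. cadj V (?P (cadj (\<pi>Phi x) (?Q (W k))))"
  have F: "?F = (\<lambda>h. J (?Q (\<pi>Phi x (?P (V h)))))"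
    unfolding Phi_op_def cadj_W by (simp add: comp_def)
  have "is_adjoint ?F ?G"
    unfolding is_adjoint_def F
  proof (intro allI)
    fix h k
    have "cinner (J (?Q (\<pi>Phi x (?P (V h))))) k = cinner (\<pi>Phi x (?P (V h))) (?Q (W k))"
      by (simp add: cinner_J_W positive_op_selfadjoint[OF Q])
    also have "\<dots> = cinner h (?G k)"
      by (simp add: cinner_cadj[OF \<pi>Phi_bounded] positive_op_selfadjoint[OF P] cinner_cadj[OF V_bounded])
    finally show "cinner (J (?Q (\<pi>Phi x (?P (V h))))) k = cinner h (?G k)" .
  qed
  then have "cadj ?F \<circ> ?F = (\<lambda>h. ?G (J (?Q (\<pi>Phi x (?P (V h))))))"
    by (simp add: cadj_eqI F comp_def)
  also have "\<dots> = (\<lambda>h. cadj V (\<pi>\<phi> (ip x x) (T (V h))))"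
    by (simp add: W_J op_sqrt_square[OF RS] \<pi>Phi_R[symmetric] cadj_\<pi>Phi_\<pi>Phi P_\<pi>\<phi> PRP)
  finally show ?thesis .
qed

lemma compression_mono:
  assumes C1: "in_commutant \<pi>Phi T1 S1" and C2: "in_commutant \<pi>Phi T2 S2"
    and T1: "positive_op T1" and le: "op_le T1 T2"
  shows "op_le (\<lambda>h. cadj V (\<pi>\<phi> (ip x x) (T1 (V h)))) (\<lambda>h. cadj V (\<pi>\<phi> (ip x x) (T2 (V h))))"
proof -
  let ?M = "\<lambda>T h. cadj V (\<pi>\<phi> (ip x x) (T (V h)))"
  let ?D = "\<lambda>u. T2 u - T1 u"
  let ?E = "op_sqrt ?D"
  have T2: "bounded_clinear T2" and D: "positive_op ?D" using le unfolding op_le_def by auto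
  have T1': "bounded_clinear T1" using positive_opD(1)[OF T1] .
  have M: "bounded_clinear (?M T)" if "bounded_clinear T" for T
    by (intro bounded_clinear_compose[OF bounded_clinear_cadj[OF V_bounded]]
        bounded_clinear_compose[OF \<pi>\<phi>_bounded] bounded_clinear_compose[OF that V_bounded])
  have E: "positive_op ?E" by (rule positive_op_sqrt[OF D])
  have E_\<pi>\<phi>: "?E (\<pi>\<phi> (ip x x) u) = \<pi>\<phi> (ip x x) (?E u)" for u
    by (rule op_sqrt_intertwine[OF D D bounded_clinearD(1)[OF \<pi>\<phi>_bounded], symmetric])
      (simp add: in_commutant_commute_\<pi>\<phi>[OF C1] in_commutant_commute_\<pi>\<phi>[OF C2]
        clinear_diff[OF \<pi>\<phi>_bounded])
  have "cinner h (?M T2 h - ?M T1 h) = cinner (\<pi>Phi x (?E (V h))) (\<pi>Phi x (?E (V h)))" for h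
  proof -
    have "cinner h (?M T2 h - ?M T1 h) = cinner (V h) (\<pi>\<phi> (ip x x) (?E (?E (V h))))"
      by (simp add: clinear_diff[OF bounded_clinear_cadj[OF V_bounded]] clinear_diff[OF \<pi>\<phi>_bounded]
          cinner_cadj[OF V_bounded] op_sqrt_square[OF D])
    also have "\<dots> = cinner (\<pi>Phi x (?E (V h))) (\<pi>Phi x (?E (V h)))"
      by (simp add: E_\<pi>\<phi>[symmetric] positive_op_selfadjoint[OF E] cinner_\<pi>Phi)
    finally show ?thesis .
  qed
  then have "positive_op (\<lambda>h. ?M T2 h - ?M T1 h)"
    unfolding positive_op_def nonneg_complex_def
    using bounded_clinear_diff[OF M[OF T2] M[OF T1']] by (simp add: cinner_self_real)
  then show ?thesis unfolding op_le_def using M[OF T1'] M[OF T2] by blast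
qed

lemma Phi_op_sqrt_mono:
  assumes "in_commutant \<pi>Phi T1 S1" "in_commutant \<pi>Phi T2 S2" "positive_op T1" "op_le T1 T2"
  shows "op_le (cadj (Phi_op W V \<pi>Phi (op_sqrt T1) (op_sqrt S1) x) \<circ> Phi_op W V \<pi>Phi (op_sqrt T1) (op_sqrt S1) x)
               (cadj (Phi_op W V \<pi>Phi (op_sqrt T2) (op_sqrt S2) x) \<circ> Phi_op W V \<pi>Phi (op_sqrt T2) (op_sqrt S2) x)"
proof -
  have "positive_op T2" using assms(3,4) by (rule op_le_positive)
  then show ?thesis
    using compression_mono[OF assms] Phi_op_sqrt_gram assms(1,2,3) by simp
qed

end

theorem lemma2p12:
  fixes act :: "'x::{complex_normed_vector,complete_space} \<Rightarrow> 'a::cstar_algebra \<Rightarrow> 'x"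
    and ip :: "'x \<Rightarrow> 'x \<Rightarrow> 'a"
    and Phi :: "'x \<Rightarrow> 'h::chilbert_space \<Rightarrow> 'k::chilbert_space"
    and \<phi> :: "'a \<Rightarrow> 'h \<Rightarrow> 'h"
    and \<pi>\<phi> :: "'a \<Rightarrow> 'hp::chilbert_space \<Rightarrow> 'hp"
    and V :: "'h \<Rightarrow> 'hp"
    and J :: "'kp::chilbert_space \<Rightarrow> 'k"
    and W :: "'k \<Rightarrow> 'kp"
    and \<pi>Phi :: "'x \<Rightarrow> 'hp \<Rightarrow> 'kp"
  assumes X: "hilbert_module act ip" and full: "full_module ip"
    and Phi_bdd: "\<forall>x. bounded_clinear (Phi x)"
    and \<phi>_cp: "cp_map \<phi>"
    and Phi_cp: "\<forall>x y. cadj (Phi x) \<circ> Phi y = \<phi> (ip x y)"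
    and \<pi>\<phi>_rep: "star_rep \<pi>\<phi>"
    and V_bdd: "bounded_clinear V"
    and \<phi>_dil: "\<forall>a. \<phi> a = cadj V \<circ> \<pi>\<phi> a \<circ> V"
    and minimal: "closure (cspan {\<pi>\<phi> a (V h) | a h. True}) = UNIV"
    \<comment> \<open>\<open>K_\<Phi> = [\<Phi>(X)H] \<subseteq> K\<close>, realised as the range of the isometric inclusion \<open>J\<close>\<close>
    and J_bdd: "bounded_clinear J"
    and J_isometry: "\<forall>u v. cinner (J u) (J v) = cinner u v"
    and J_range: "range J = closure (cspan {Phi x h | x h. True})"
    \<comment> \<open>\<open>\<pi>_\<Phi>\<close>: representation with underlying \<open>\<pi>_\<phi>\<close>, \<open>\<pi>_\<Phi>(x)\<pi>_\<phi>(a)V h = \<Phi>(xa)h\<close>\<close>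
    and \<pi>Phi_rep: "module_rep ip \<pi>Phi \<pi>\<phi>"
    and \<pi>Phi_def: "\<forall>x a h. J (\<pi>Phi x (\<pi>\<phi> a (V h))) = Phi (act x a) h"
    \<comment> \<open>\<open>W_\<Phi> k = p_{K_\<Phi>} k\<close>\<close>
    and W_def: "\<forall>k. is_orth_proj (range J) k (J (W k))"
  shows
    "Phi_op W V \<pi>Phi id id = Phi
     \<and> (\<forall>T S (r::real). in_commutant \<pi>Phi T S \<and> positive_op T \<and> positive_op S \<and> r > 0 \<longrightarrow>
          Phi_op W V \<pi>Phi (\<lambda>u. r *\<^sub>R T u) (\<lambda>u. r *\<^sub>R S u)
            = (\<lambda>x h. r *\<^sub>R Phi_op W V \<pi>Phi T S x h))
     \<and> (\<forall>T1 S1 T2 S2. in_commutant \<pi>Phi T1 S1 \<and> in_commutant \<pi>Phi T2 S2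
          \<and> positive_op T1 \<and> op_le T1 T2 \<longrightarrow>
          (\<forall>x. op_le (cadj (Phi_op W V \<pi>Phi (op_sqrt T1) (op_sqrt S1) x) \<circ> Phi_op W V \<pi>Phi (op_sqrt T1) (op_sqrt S1) x)
                     (cadj (Phi_op W V \<pi>Phi (op_sqrt T2) (op_sqrt S2) x) \<circ> Phi_op W V \<pi>Phi (op_sqrt T2) (op_sqrt S2) x)))"
proof -
  have ip_act: "\<forall>x y a. ip x (act y a) = ip x y * a"
    using X unfolding hilbert_module_def by (elim conjE) assumption
  interpret stinespring_construction act ip Phi \<phi> \<pi>\<phi> V J W \<pi>Phi
    by (unfold_locales; (fact minimal J_range W_def[rule_format])?)
      (simp_all add: ip_act Phi_bdd Phi_cp \<pi>\<phi>_rep V_bdd \<phi>_dil J_bdd J_isometry \<pi>Phi_rep \<pi>Phi_def)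
  show ?thesis
    by (simp add: Phi_op_id Phi_op_scaleR Phi_op_sqrt_mono)
qed

end
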